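(* Let $\sigma_n,\sigma\in\Sigma$ with $d_S(\sigma_n,\sigma)\to0$. Then $d_\Sigma(\sigma_n,\sigma)\to0$ if and only if for every $b\in\mathbb R^d$ $$\lim_{h\to-\infty}\sup_n|h|^{-(d+1)/d}|y^{b,h}(\sigma_n)|_\infty=0,$$ and this condition (for every $b$) is equivalent to: for every $b\in\mathbb R^d$, $$\lim_{M\to\infty}\sup_n\sup_{y\le b,\ |y|_\infty\ge M}\frac{\sigma_n(y)}{|y|_\infty^{d/(d+1)}}=-\infty.$$
   Context: Fix $d\ge2$. Order on $\mathbb R^d$: $x\le y$ iff $x_i\le y_i$ for all $i$; $|x|_\infty=\max_i|x_i|$; $[a,b]=\{x:a\le x\le b\}$. $\mathbb Z^*=\mathbb Z\cup\{\pm\infty\}$ with the discrete metric $r(x,y)=\mathbf 1\{x\ne y\}$. $D(\mathbb R^d,\mathbb Z^* )$ is the set of functions $\sigma:\mathbb R^d\to\mathbb Z^*$ such that for every bounded rectangle $[a,b)$ there are finite partitions $a_i=s_i^0<\dots<s_i^{m_i}=b_i$ of each coordinate axis with $\sigma$ constant on each rectangle $\prod_i[s_i^{k_i},s_i^{k_i+1})$. For $u>0$, $[x]_u=((x_1\wedge u)\vee(-u),\dots,(x_d\wedge u)\vee(-u))$. $\Lambda$ is the set of maps $\lambda(x)=(\lambda_1(x_1),\dots,\lambda_d(x_d))$, each $\lambda_i$ bijective strictly increasing Lipschitz on $\mathbb R$, with $\gamma(\lambda)=\sum_i\sup_{s\ne t}|\log\frac{\lambda_i(t)-\lambda_i(s)}{t-s}|+\int_0^\infty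 e^{-u}(1\wedge\sup_x|[\lambda(x)]_u-[x]_u|_\infty)du<\infty$. $d_S(\rho,\sigma)=\inf_{\lambda\in\Lambda}\{\gamma(\lambda)\vee\int_0^\infty e^{-u}\sup_x r(\rho([x]_u),\sigma([\lambda(x)]_u))du\}$. $\Sigma$ is the set of $\sigma\in D(\mathbb R^d,\mathbb Z^* )$ that are nondecreasing ($x\le y\Rightarrow\sigma(x)\le\sigma(y)$) and satisfy, for every $b\in\mathbb R^d$, $\lim_{M\to\infty}\sup\{|y|_\infty^{-d/(d+1)}\sigma(y):y\le b,|y|_\infty\ge M\}=-\infty$. For $\sigma\in\Sigma$, $h\in\mathbb Z$, $b\in\mathbb R^d$, $y^{b,h}(\sigma)$ is the maximal $y\le b$ such that $[y,b]$ contains $\{x\le b:\sigma(x)\ge h\}$ ($=b$ if empty). $\theta_b(\rho,\sigma)=\sup_{h\le-1}|h|^{-(d+1)/d}|y^{b,h}(\rho)-y^{b,h}(\sigma)|_\infty$, $\Theta(\rho,\sigma)=\int_{\mathbb R^d}e^{-|b|_\infty}(1\wedge\theta_b(\rho,\sigma))db$, and $d_\Sigma(\rho,\sigma)=\Theta(\rho,\sigma)+d_S(\rho,\sigma)$. *)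

theory Defs
  imports "HOL-Analysis.Analysis" "HOL-Library.Extended"
begin

text \<open>Points of R^d are vectors of type real^'n (d = CARD('n)); the order is the
 componentwise order of the library; |x|_inf is infnorm.  Z* is int extended
 (Fin k, Pinf, Minf) with its library order.\<close>

definition zs_ereal :: "int extended \<Rightarrow> ereal" where
  "zs_ereal z = (case z of Fin k \<Rightarrow> ereal (real_of_int k) | Pinf \<Rightarrow> PInfty | Minf \<Rightarrow> MInfty)"

definition clamp :: "real \<Rightarrow> real^'n \<Rightarrow> real^'n" where
  "clamp u x = (\<chi> i. max (min (x$i) u) (-u))"

text \<open>D(R^d, Z*): on every bounded rectangle [a,b) there are finite coordinate
 partitions a_i = s_i^0 < ... < s_i^m = b_i such that sigma is constant on every cell
 prod_i [s_i^k, s_i^(k+1)).  The partition of axis i is the finite set S i of its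
 points; two points of [a,b) lie in the same cell iff for no i a partition point of
 axis i separates their i-th coordinates.\<close>
definition same_cell :: "('n \<Rightarrow> real set) \<Rightarrow> real^'n \<Rightarrow> real^'n \<Rightarrow> bool" where
  "same_cell S x y \<longleftrightarrow> (\<forall>i. \<forall>s\<in>S i. \<not> (x$i < s \<and> s \<le> y$i) \<and> \<not> (y$i < s \<and> s \<le> x$i))"

definition in_D :: "(real^'n::finite \<Rightarrow> int extended) \<Rightarrow> bool" where
  "in_D \<sigma> \<longleftrightarrow> (\<forall>a b::real^'n. (\<forall>i. a$i < b$i) \<longrightarrow>
      (\<exists>S :: 'n \<Rightarrow> real set. (\<forall>i. finite (S i) \<and> a$i \<in> S i \<and> b$i \<in> S i \<and> S i \<subseteq> {a$i..b$i}) \<and>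
         (\<forall>x y. (\<forall>i. a$i \<le> x$i \<and> x$i < b$i) \<longrightarrow> (\<forall>i. a$i \<le> y$i \<and> y$i < b$i) \<longrightarrow>
                same_cell S x y \<longrightarrow> \<sigma> x = \<sigma> y)))"

definition apply_tc :: "('n \<Rightarrow> real \<Rightarrow> real) \<Rightarrow> real^'n \<Rightarrow> real^'n" where
  "apply_tc lam x = (\<chi> i. lam i (x$i))"

definition gamma :: "('n::finite \<Rightarrow> real \<Rightarrow> real) \<Rightarrow> ennreal" where
  "gamma lam =
     (\<Sum>i\<in>UNIV. (SUP st\<in>{(s,t). s \<noteq> t}. ennreal \<bar>ln ((lam i (snd st) - lam i (fst st)) / (snd st - fst st))\<bar>))
     + (\<integral>\<^sup>+ u\<in>{0..}. ennreal (exp (-u)) *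
           min 1 (SUP x::real^'n. ennreal (infnorm (clamp u (apply_tc lam x) - clamp u x))) \<partial>lborel)"

definition Lambda :: "('n::finite \<Rightarrow> real \<Rightarrow> real) set" where
  "Lambda = {lam. (\<forall>i. bij (lam i) \<and> strict_mono (lam i) \<and> (\<exists>C. C-lipschitz_on UNIV (lam i)))
                 \<and> gamma lam < \<infinity>}"

definition dS :: "(real^'n::finite \<Rightarrow> int extended) \<Rightarrow> (real^'n \<Rightarrow> int extended) \<Rightarrow> ennreal" where
  "dS \<rho> \<sigma> = (INF lam\<in>Lambda. max (gamma lam)
      (\<integral>\<^sup>+ u\<in>{0..}. ennreal (exp (-u)) *
          (SUP x::real^'n. (if \<rho> (clamp u x) \<noteq> \<sigma> (clamp u (apply_tc lam x)) then 1 else 0)) \<partial>lborel))"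

definition Sigma_set :: "(real^'n::finite \<Rightarrow> int extended) set" where
  "Sigma_set = {\<sigma>. in_D \<sigma> \<and> (\<forall>x y. x \<le> y \<longrightarrow> \<sigma> x \<le> \<sigma> y) \<and>
     (\<forall>b::real^'n.
        ((\<lambda>M::real. SUP y\<in>{y. y \<le> b \<and> infnorm y \<ge> M}.
             ereal (infnorm y powr (- real CARD('n) / (real CARD('n) + 1))) * zs_ereal (\<sigma> y))
          \<longlongrightarrow> MInfty) at_top)}"

definition ybh :: "real^'n::finite \<Rightarrow> int \<Rightarrow> (real^'n \<Rightarrow> int extended) \<Rightarrow> real^'n" where
  "ybh b h \<sigma> = (if {x. x \<le> b \<and> \<sigma> x \<ge> Fin h} = {} then b
     else (GREATEST y. y \<le> b \<and> {x. x \<le> b \<and> \<sigma> x \<ge> Fin h} \<subseteq> {y..b}))"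

definition theta :: "real^'n::finite \<Rightarrow> (real^'n \<Rightarrow> int extended) \<Rightarrow> (real^'n \<Rightarrow> int extended) \<Rightarrow> ennreal" where
  "theta b \<rho> \<sigma> = (SUP h\<in>{h::int. h \<le> -1}.
      ennreal (\<bar>real_of_int h\<bar> powr (- (real CARD('n) + 1) / real CARD('n)) * infnorm (ybh b h \<rho> - ybh b h \<sigma>)))"

definition Theta :: "(real^'n::finite \<Rightarrow> int extended) \<Rightarrow> (real^'n \<Rightarrow> int extended) \<Rightarrow> ennreal" where
  "Theta \<rho> \<sigma> = (\<integral>\<^sup>+ b. ennreal (exp (- infnorm b)) * min 1 (theta b \<rho> \<sigma>) \<partial>lborel)"

definition dSigma :: "(real^'n::finite \<Rightarrow> int extended) \<Rightarrow> (real^'n \<Rightarrow> int extended) \<Rightarrow> ennreal" where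
  "dSigma \<rho> \<sigma> = Theta \<rho> \<sigma> + dS \<rho> \<sigma>"

end

(*
  Write p = (d+1)/d and q = d/(d+1) = 1/p. Both conditions on the right-hand side say that the
  superlevel sets {x <= b. sigma_n x >= h} lie in a cube of radius o(|h|^p) as h -> -oo, uniformly
  in n (the predicate small_superlevels): y^{b,h} is the lower corner of the smallest box [y, b] containing
  such a set, and the growth condition is the same bound after inverting t -> t^q.

  If d_Sigma(sigma_n, sigma) -> 0, then Theta(sigma_n, sigma) -> 0, so for large n some corner b' in
  [b, b + 1] has small theta_b'(sigma_n, sigma); hence y^{b',h}(sigma_n) is close to y^{b',h}(sigma),
  which is o(|h|^p) because sigma lies in Sigma.

  Conversely, under the uniform bound the terms of theta_b with |h| large are small for all n, while
  for the remaining levels all superlevel sets lie in a fixed box. There d_S(sigma_n, sigma) -> 0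
  provides time changes lambda close to the identity with sigma_n = sigma o lambda; they move y^{b,h}
  by little, and y^{lambda b,h}(sigma) = y^{b,h}(sigma) unless b is close to one of the finitely many
  partition hyperplanes of sigma, which happens only on a set of small measure.
*)

theory Submission
  imports Defs
begin

lemma infnorm_le_iff_cart: "infnorm (x::real^'n) \<le> r \<longleftrightarrow> (\<forall>i. \<bar>x$i\<bar> \<le> r)"
proof
  assume "\<forall>i. \<bar>x$i\<bar> \<le> r"
  then show "infnorm x \<le> r" unfolding infnorm_cart by (intro cSup_least) auto
qed (use component_le_infnorm_cart order_trans in blast)

lemma const_le_of_infnorm_le:
  fixes x :: "real^'n" assumes "infnorm x \<le> r" shows "(\<chi> i. - r) \<le> x"
  using assms unfolding infnorm_le_iff_cart less_eq_vec_def by (simp add: abs_le_iff minus_le_iff)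

lemma infnorm_diff_le: "infnorm (x - y) \<le> infnorm x + infnorm (y::'a::euclidean_space)"
  using infnorm_triangle[of x "- y"] by (simp add: infnorm_neg)

lemma cInf_le_cInf_add:
  fixes A B :: "real set"
  assumes "B \<noteq> {}" "bdd_below A" "\<And>y. y \<in> B \<Longrightarrow> \<exists>x\<in>A. x \<le> y + \<eta>"
  shows "Inf A \<le> Inf B + \<eta>"
proof -
  have "Inf A - \<eta> \<le> Inf B"
  proof (rule cInf_greatest)
    fix y assume "y \<in> B"
    then obtain x where "x \<in> A" "x \<le> y + \<eta>" using assms(3) by blast
    with \<open>bdd_below A\<close> show "Inf A - \<eta> \<le> y" using cInf_lower[of x A] by linarith
  qed (fact assms(1))
  then show ?thesis by simp
qed

lemma eventually_le_mult_abs_powr: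
  fixes c \<epsilon> p :: real
  assumes "0 < \<epsilon>" "0 < p"
  shows "\<forall>\<^sub>F h::int in at_bot. c \<le> \<epsilon> * \<bar>real_of_int h\<bar> powr p"
proof -
  define X where "X = (\<bar>c\<bar> / \<epsilon>) powr (1 / p)"
  have "c \<le> \<epsilon> * \<bar>real_of_int h\<bar> powr p" if "h \<le> - \<lceil>X\<rceil>" for h
  proof -
    have "X powr p \<le> \<bar>real_of_int h\<bar> powr p"
      using that assms by (intro powr_mono2) (auto simp: X_def, linarith)
    moreover have "X powr p = \<bar>c\<bar> / \<epsilon>" using assms by (simp add: X_def powr_powr)
    ultimately show ?thesis using assms by (simp add: field_simps)
  qed
  then show ?thesis unfolding eventually_at_bot_linorder by blast
qed

lemma tendsto_SUP_ereal_0_iff: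
  fixes g :: "'a \<Rightarrow> 'b \<Rightarrow> real"
  assumes "\<And>h n. 0 \<le> g h n"
  shows "((\<lambda>h. SUP n. ereal (g h n)) \<longlongrightarrow> 0) F \<longleftrightarrow> (\<forall>\<epsilon>>0. \<forall>\<^sub>F h in F. \<forall>n. g h n \<le> \<epsilon>)"
proof
  assume lim: "((\<lambda>h. SUP n. ereal (g h n)) \<longlongrightarrow> 0) F"
  show "\<forall>\<epsilon>>0. \<forall>\<^sub>F h in F. \<forall>n. g h n \<le> \<epsilon>"
  proof (intro allI impI)
    fix \<epsilon> :: real assume "\<epsilon> > 0"
    with lim have "\<forall>\<^sub>F h in F. (SUP n. ereal (g h n)) < ereal \<epsilon>"
      by (intro order_tendstoD(2)) auto
    then show "\<forall>\<^sub>F h in F. \<forall>n. g h n \<le> \<epsilon>"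
      by eventually_elim (metis SUP_upper UNIV_I ereal_less_eq(3) order.strict_trans1 less_imp_le)
  qed
next
  assume small: "\<forall>\<epsilon>>0. \<forall>\<^sub>F h in F. \<forall>n. g h n \<le> \<epsilon>"
  show "((\<lambda>h. SUP n. ereal (g h n)) \<longlongrightarrow> 0) F"
  proof (rule order_tendstoI)
    fix l :: ereal assume "l < 0"
    have "l < (SUP n. ereal (g h n))" for h
      using \<open>l < 0\<close> assms[of h undefined] SUP_upper[of undefined UNIV "\<lambda>n. ereal (g h n)"]
      by (meson UNIV_I ereal_less_eq(5) order_less_le_trans)
    then show "\<forall>\<^sub>F h in F. l < (SUP n. ereal (g h n))" by simp
  next
    fix u :: ereal assume "u > 0"
    then obtain \<epsilon> where \<epsilon>: "0 < \<epsilon>" "ereal \<epsilon> < u"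
      using ereal_dense2 by (metis ereal_less(2))
    from small \<epsilon>(1) have "\<forall>\<^sub>F h in F. \<forall>n. g h n \<le> \<epsilon>" by blast
    then show "\<forall>\<^sub>F h in F. (SUP n. ereal (g h n)) < u"
    proof eventually_elim
      case (elim h)
      then have "(SUP n. ereal (g h n)) \<le> ereal \<epsilon>" by (intro SUP_least) auto
      with \<epsilon>(2) show ?case by (rule order.strict_trans1[rotated])
    qed
  qed
qed

lemma powr_neg_mult_le_iff: "0 < (t::real) \<Longrightarrow> t powr (- p) * y \<le> \<epsilon> \<longleftrightarrow> y \<le> \<epsilon> * t powr p"
  by (simp add: powr_minus field_simps)

lemma le_mult_powr_iff:
  fixes a \<epsilon> t p q :: real
  assumes a: "0 \<le> a" and \<epsilon>: "0 < \<epsilon>" and t: "0 \<le> t" and p: "0 < p" and pq: "p * q = 1"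
  shows "a \<le> \<epsilon> * t powr p \<longleftrightarrow> \<epsilon> powr (- q) * a powr q \<le> t"
proof -
  have q: "0 < q" using p pq by (metis zero_less_mult_pos zero_less_one)
  have inv: "(x powr p) powr q = x" "(x powr q) powr p = x" if "0 \<le> x" for x :: real
    using that pq by (simp_all add: powr_powr mult.commute)
  have "a \<le> \<epsilon> * t powr p \<longleftrightarrow> a powr q \<le> (\<epsilon> * t powr p) powr q"
  proof
    assume "a \<le> \<epsilon> * t powr p"
    then show "a powr q \<le> (\<epsilon> * t powr p) powr q" using a q by (intro powr_mono2) auto
  next
    assume "a powr q \<le> (\<epsilon> * t powr p) powr q"
    then have "(a powr q) powr p \<le> ((\<epsilon> * t powr p) powr q) powr p" using p by (meson powr_mono2 less_imp_le powr_ge_zero)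
    then show "a \<le> \<epsilon> * t powr p" using a \<epsilon> by (simp add: inv)
  qed
  also have "(\<epsilon> * t powr p) powr q = \<epsilon> powr q * t" using \<epsilon> t by (simp add: powr_mult inv)
  also have "a powr q \<le> \<epsilon> powr q * t \<longleftrightarrow> \<epsilon> powr (- q) * a powr q \<le> t"
    using \<epsilon> by (simp add: powr_minus field_simps)
  finally show ?thesis .
qed

section \<open>Superlevel sets and their lower corners\<close>

definition superlevel :: "(real^'n::finite \<Rightarrow> int extended) \<Rightarrow> real^'n \<Rightarrow> int \<Rightarrow> (real^'n) set" where
  "superlevel \<sigma> b h = {x. x \<le> b \<and> Fin h \<le> \<sigma> x}"

lemma superlevel_antimono: "h' \<le> h \<Longrightarrow> b \<le> b' \<Longrightarrow> superlevel \<sigma> b h \<subseteq> superlevel \<sigma> b' h'"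
  by (auto simp: superlevel_def) (meson less_eq_extended.simps(1) order_trans)

lemma bdd_below_image_nth: "bdd_below (E :: (real^'n) set) \<Longrightarrow> bdd_below ((\<lambda>x. x$i) ` E)"
  by (rule bdd_below_image_mono) (auto simp: mono_def less_eq_vec_def)

lemma ybh_empty: "superlevel \<sigma> b h = {} \<Longrightarrow> ybh b h \<sigma> = b"
  by (simp add: ybh_def superlevel_def)

lemma ybh_eq_INF:
  fixes \<sigma> :: "real^'n::finite \<Rightarrow> int extended"
  assumes ne: "superlevel \<sigma> b h \<noteq> {}" and bdd: "bdd_below (superlevel \<sigma> b h)"
  shows "ybh b h \<sigma> = (\<chi> i. INF x\<in>superlevel \<sigma> b h. x$i)"
proof -
  let ?E = "superlevel \<sigma> b h"
  let ?y = "(\<chi> i. INF x\<in>?E. x$i) :: real^'n"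
  have lower: "?y \<le> x" if "x \<in> ?E" for x
    using that bdd_below_image_nth[OF bdd] by (auto simp: less_eq_vec_def intro: cInf_lower)
  moreover have "?y \<le> b"
    using ne lower by (auto simp: superlevel_def intro: order_trans)
  moreover have "y \<le> ?y" if "y \<le> b \<and> ?E \<subseteq> {y..b}" for y
    using that ne by (auto simp: less_eq_vec_def intro!: cInf_greatest)
  ultimately have "(GREATEST y. y \<le> b \<and> ?E \<subseteq> {y..b}) = ?y"
    by (intro Greatest_equality) (auto simp: superlevel_def)
  then show ?thesis using ne unfolding ybh_def superlevel_def by auto
qed

lemma ybh_le:
  assumes "bdd_below (superlevel \<sigma> b h)" and "x \<in> superlevel \<sigma> b h"
  shows "ybh b h \<sigma> \<le> x"
proof -
  have "superlevel \<sigma> b h \<noteq> {}" using assms(2) by auto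
  then show ?thesis
    using assms bdd_below_image_nth[OF assms(1)]
    by (auto simp: ybh_eq_INF less_eq_vec_def intro: cInf_lower)
qed

lemma infnorm_ybh_le:
  fixes \<sigma> :: "real^'n::finite \<Rightarrow> int extended"
  assumes r: "\<forall>x\<in>superlevel \<sigma> b h. infnorm x \<le> r"
  shows "infnorm (ybh b h \<sigma>) \<le> max r (infnorm b)"
proof (cases "superlevel \<sigma> b h = {}")
  case False
  then obtain x0 where x0: "x0 \<in> superlevel \<sigma> b h" by auto
  have lower: "\<forall>x\<in>superlevel \<sigma> b h. (\<chi> i. - r) \<le> x"
    using r const_le_of_infnorm_le by blast
  then have bdd: "bdd_below (superlevel \<sigma> b h)" by (auto simp: bdd_below_def)
  have "\<bar>ybh b h \<sigma> $ i\<bar> \<le> r" for i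
  proof -
    have "- r \<le> ybh b h \<sigma> $ i"
      using False lower by (auto simp: ybh_eq_INF[OF False bdd] less_eq_vec_def intro!: cInf_greatest)
    moreover have "ybh b h \<sigma> $ i \<le> x0 $ i"
      using ybh_le[OF bdd x0] by (simp add: less_eq_vec_def)
    moreover have "x0 $ i \<le> r" using r x0 component_le_infnorm_cart[of x0 i] by auto
    ultimately show ?thesis by auto
  qed
  then have "infnorm (ybh b h \<sigma>) \<le> r" by (simp add: infnorm_le_iff_cart)
  then show ?thesis by simp
qed (simp add: ybh_empty)

lemma infnorm_le_ybh:
  fixes \<sigma> :: "real^'n::finite \<Rightarrow> int extended"
  assumes "bdd_below (superlevel \<sigma> b h)" and x: "x \<in> superlevel \<sigma> b h"
  shows "infnorm x \<le> max (infnorm (ybh b h \<sigma>)) (infnorm b)"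
  unfolding infnorm_le_iff_cart
proof
  fix i
  have "ybh b h \<sigma> $ i \<le> x $ i" using ybh_le[OF assms] by (simp add: less_eq_vec_def)
  moreover have "x $ i \<le> b $ i" using x by (simp add: superlevel_def less_eq_vec_def)
  ultimately show "\<bar>x $ i\<bar> \<le> max (infnorm (ybh b h \<sigma>)) (infnorm b)"
    using component_le_infnorm_cart[of "ybh b h \<sigma>" i] component_le_infnorm_cart[of b i] by auto
qed

lemma infnorm_ybh_diff_le:
  fixes \<rho> \<sigma> :: "real^'n::finite \<Rightarrow> int extended"
  assumes bdd1: "bdd_below (superlevel \<rho> b h)" and bdd2: "bdd_below (superlevel \<sigma> b' h)"
    and to2: "\<And>x. x \<in> superlevel \<rho> b h \<Longrightarrow> \<exists>x'\<in>superlevel \<sigma> b' h. \<forall>i. x'$i \<le> x$i + \<eta>"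
    and to1: "\<And>x'. x' \<in> superlevel \<sigma> b' h \<Longrightarrow> \<exists>x\<in>superlevel \<rho> b h. \<forall>i. x$i \<le> x'$i + \<eta>"
    and "infnorm (b - b') \<le> \<eta>"
  shows "infnorm (ybh b h \<rho> - ybh b' h \<sigma>) \<le> \<eta>"
proof (cases "superlevel \<rho> b h = {}")
  case True
  then have "superlevel \<sigma> b' h = {}" using to1 by blast
  with True show ?thesis using assms(5) by (simp add: ybh_empty)
next
  case False
  then have ne2: "superlevel \<sigma> b' h \<noteq> {}" using to2 by blast
  have up1: "(INF x\<in>superlevel \<rho> b h. x$i) \<le> (INF x\<in>superlevel \<sigma> b' h. x$i) + \<eta>" for i
  proof (rule cInf_le_cInf_add)
    show "(\<lambda>x. x$i) ` superlevel \<sigma> b' h \<noteq> {}" using ne2 by simp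
  qed (use bdd_below_image_nth[OF bdd1] to1 in fastforce)+
  have up2: "(INF x\<in>superlevel \<sigma> b' h. x$i) \<le> (INF x\<in>superlevel \<rho> b h. x$i) + \<eta>" for i
  proof (rule cInf_le_cInf_add)
    show "(\<lambda>x. x$i) ` superlevel \<rho> b h \<noteq> {}" using False by simp
  qed (use bdd_below_image_nth[OF bdd2] to2 in fastforce)+
  have "\<bar>(INF x\<in>superlevel \<rho> b h. x$i) - (INF x\<in>superlevel \<sigma> b' h. x$i)\<bar> \<le> \<eta>" for i
    using up1[of i] up2[of i] by linarith
  then show ?thesis
    unfolding infnorm_le_iff_cart ybh_eq_INF[OF False bdd1] ybh_eq_INF[OF ne2 bdd2] by simp
qed

section \<open>Uniformly small superlevel sets\<close>

definition small_superlevels :: "real \<Rightarrow> (nat \<Rightarrow> real^'n::finite \<Rightarrow> int extended) \<Rightarrow> real^'n \<Rightarrow> bool" where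
  "small_superlevels p F b \<longleftrightarrow>
     (\<forall>\<epsilon>>0. \<forall>\<^sub>F h in at_bot. \<forall>n. \<forall>x\<in>superlevel (F n) b h. infnorm x \<le> \<epsilon> * \<bar>real_of_int h\<bar> powr p)"

lemma small_superlevels_imp_ybh_decay:
  assumes p: "0 < p" and small: "small_superlevels p F b"
  shows "\<forall>\<epsilon>>0. \<forall>\<^sub>F h in at_bot. \<forall>n. \<bar>real_of_int h\<bar> powr (- p) * infnorm (ybh b h (F n)) \<le> \<epsilon>"
proof (intro allI impI)
  fix \<epsilon> :: real assume "\<epsilon> > 0"
  with small p have "\<forall>\<^sub>F h in at_bot. (\<forall>n. \<forall>x\<in>superlevel (F n) b h. infnorm x \<le> \<epsilon> * \<bar>real_of_int h\<bar> powr p)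
      \<and> infnorm b \<le> \<epsilon> * \<bar>real_of_int h\<bar> powr p \<and> h \<le> -1"
    unfolding small_superlevels_def
    by (intro eventually_conj eventually_le_mult_abs_powr eventually_le_at_bot) auto
  then show "\<forall>\<^sub>F h in at_bot. \<forall>n. \<bar>real_of_int h\<bar> powr (- p) * infnorm (ybh b h (F n)) \<le> \<epsilon>"
    by eventually_elim (use infnorm_ybh_le in \<open>fastforce simp: powr_neg_mult_le_iff\<close>)
qed

lemma ybh_decay_imp_small_superlevels:
  assumes p: "0 < p" and bdd: "\<And>n h. bdd_below (superlevel (F n) b h)"
    and decay: "\<forall>\<epsilon>>0. \<forall>\<^sub>F h in at_bot. \<forall>n. \<bar>real_of_int h\<bar> powr (- p) * infnorm (ybh b h (F n)) \<le> \<epsilon>"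
  shows "small_superlevels p F b"
  unfolding small_superlevels_def
proof (intro allI impI)
  fix \<epsilon> :: real assume "\<epsilon> > 0"
  with decay p have "\<forall>\<^sub>F h in at_bot. (\<forall>n. \<bar>real_of_int h\<bar> powr (- p) * infnorm (ybh b h (F n)) \<le> \<epsilon>)
      \<and> infnorm b \<le> \<epsilon> * \<bar>real_of_int h\<bar> powr p \<and> h \<le> -1"
    by (intro eventually_conj eventually_le_mult_abs_powr eventually_le_at_bot) auto
  then show "\<forall>\<^sub>F h in at_bot. \<forall>n. \<forall>x\<in>superlevel (F n) b h. infnorm x \<le> \<epsilon> * \<bar>real_of_int h\<bar> powr p"
  proof eventually_elim
    case (elim h)
    show ?case
    proof (intro allI ballI)
      fix n x assume "x \<in> superlevel (F n) b h"
      moreover have "0 < \<bar>real_of_int h\<bar>" using elim by simp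
      then have "infnorm (ybh b h (F n)) \<le> \<epsilon> * \<bar>real_of_int h\<bar> powr p"
        using elim powr_neg_mult_le_iff by blast
      ultimately show "infnorm x \<le> \<epsilon> * \<bar>real_of_int h\<bar> powr p"
        using infnorm_le_ybh[OF bdd] elim by fastforce
    qed
  qed
qed

lemma ybh_decay_iff_small_superlevels:
  fixes F :: "nat \<Rightarrow> real^'n::finite \<Rightarrow> int extended"
  assumes "0 < p" and "\<And>n h. bdd_below (superlevel (F n) b h)"
  shows "((\<lambda>h. SUP n. ereal (\<bar>real_of_int h\<bar> powr (- p) * infnorm (ybh b h (F n)))) \<longlongrightarrow> 0) at_bot
    \<longleftrightarrow> small_superlevels p F b"
proof -
  have "((\<lambda>h. SUP n. ereal (\<bar>real_of_int h\<bar> powr (- p) * infnorm (ybh b h (F n)))) \<longlongrightarrow> 0) at_bot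
    \<longleftrightarrow> (\<forall>\<epsilon>>0. \<forall>\<^sub>F h in at_bot. \<forall>n. \<bar>real_of_int h\<bar> powr (- p) * infnorm (ybh b h (F n)) \<le> \<epsilon>)"
    by (rule tendsto_SUP_ereal_0_iff) (simp add: infnorm_pos_le)
  then show ?thesis
    using small_superlevels_imp_ybh_decay[OF assms(1), of F b]
      ybh_decay_imp_small_superlevels[where F = F and b = b, OF assms] by blast
qed

lemma growth_term_less_imp:
  fixes z :: "int extended" and a K q :: real
  assumes a: "0 < a" and less: "ereal (a powr (- q)) * zs_ereal z < ereal (- K)" and h: "Fin h \<le> z"
  shows "K * a powr q < \<bar>real_of_int h\<bar>"
proof (cases z)
  case (Fin k)
  with less a have "k < - K * a powr q" by (simp add: zs_ereal_def powr_minus field_simps)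
  moreover have "h \<le> k" using h Fin by simp
  ultimately show ?thesis by linarith
qed (use assms in \<open>auto simp: zs_ereal_def\<close>)

lemma growth_term_le:
  fixes z :: "int extended" and a K q :: real
  assumes "0 < a" and "z \<noteq> Pinf" and "\<And>k. z = Fin k \<Longrightarrow> K * a powr q \<le> - real_of_int k"
  shows "ereal (a powr (- q)) * zs_ereal z \<le> ereal (- K)"
  using assms by (cases z) (auto simp: zs_ereal_def powr_minus field_simps)

lemma growth_obtains_radius:
  fixes F :: "nat \<Rightarrow> real^'n::finite \<Rightarrow> int extended"
  assumes "((\<lambda>M. SUP n. SUP y\<in>{y. y \<le> b \<and> M \<le> infnorm y}.
                    ereal (infnorm y powr (- q)) * zs_ereal (F n y)) \<longlongrightarrow> MInfty) at_top"
  obtains M where "0 < M"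
    "\<And>n y. y \<le> b \<Longrightarrow> M \<le> infnorm y \<Longrightarrow> ereal (infnorm y powr (- q)) * zs_ereal (F n y) < ereal r"
proof -
  have "\<forall>\<^sub>F M in at_top. (SUP n. SUP y\<in>{y. y \<le> b \<and> M \<le> infnorm y}.
                    ereal (infnorm y powr (- q)) * zs_ereal (F n y)) < ereal r"
    using assms by (simp add: tendsto_MInfty)
  then obtain M0 where M0: "\<And>M. M \<ge> M0 \<Longrightarrow> (SUP n. SUP y\<in>{y. y \<le> b \<and> M \<le> infnorm y}.
                    ereal (infnorm y powr (- q)) * zs_ereal (F n y)) < ereal r"
    by (auto simp: eventually_at_top_linorder)
  have "ereal (infnorm y powr (- q)) * zs_ereal (F n y) < ereal r"
    if "y \<le> b" "max M0 1 \<le> infnorm y" for n y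
  proof -
    have "ereal (infnorm y powr (- q)) * zs_ereal (F n y) \<le> (SUP n. SUP y\<in>{y. y \<le> b \<and> max M0 1 \<le> infnorm y}.
                    ereal (infnorm y powr (- q)) * zs_ereal (F n y))"
      by (rule SUP_upper2[of n]) (use that in \<open>auto intro: SUP_upper\<close>)
    also have "\<dots> < ereal r" by (rule M0) simp
    finally show ?thesis .
  qed
  then show thesis by (intro that[of "max M0 1"]) auto
qed

lemma growth_imp_small_superlevels:
  fixes F :: "nat \<Rightarrow> real^'n::finite \<Rightarrow> int extended"
  assumes p: "0 < p" and pq: "p * q = 1"
    and growth: "((\<lambda>M. SUP n. SUP y\<in>{y. y \<le> b \<and> M \<le> infnorm y}.
                    ereal (infnorm y powr (- q)) * zs_ereal (F n y)) \<longlongrightarrow> MInfty) at_top"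
  shows "small_superlevels p F b"
  unfolding small_superlevels_def
proof (intro allI impI)
  fix \<epsilon> :: real assume \<epsilon>: "\<epsilon> > 0"
  define K where "K = \<epsilon> powr (- q)"
  obtain M where M: "0 < M"
    and far: "\<And>n y. y \<le> b \<Longrightarrow> M \<le> infnorm y \<Longrightarrow> ereal (infnorm y powr (- q)) * zs_ereal (F n y) < ereal (- K)"
    using growth_obtains_radius[OF growth, where r = "- K"] by blast
  have "\<forall>\<^sub>F h in at_bot. M \<le> \<epsilon> * \<bar>real_of_int h\<bar> powr p"
    using \<epsilon> p by (rule eventually_le_mult_abs_powr)
  then show "\<forall>\<^sub>F h in at_bot. \<forall>n. \<forall>x\<in>superlevel (F n) b h. infnorm x \<le> \<epsilon> * \<bar>real_of_int h\<bar> powr p"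
  proof (rule eventually_mono, intro allI ballI)
    fix h n x assume h: "M \<le> \<epsilon> * \<bar>real_of_int h\<bar> powr p" and x: "x \<in> superlevel (F n) b h"
    show "infnorm x \<le> \<epsilon> * \<bar>real_of_int h\<bar> powr p"
    proof (cases "infnorm x < M")
      case False
      with M have "0 < infnorm x" by simp
      moreover have "K * infnorm x powr q < \<bar>real_of_int h\<bar>"
        using x False by (intro growth_term_less_imp[OF calculation far]) (auto simp: superlevel_def)
      ultimately show ?thesis using \<epsilon> p pq by (simp add: le_mult_powr_iff K_def)
    qed (use h in simp)
  qed
qed

lemma small_superlevels_imp_growth:
  fixes F :: "nat \<Rightarrow> real^'n::finite \<Rightarrow> int extended"
  assumes p: "0 < p" and pq: "p * q = 1" and small: "small_superlevels p F b"
  shows "((\<lambda>M. SUP n. SUP y\<in>{y. y \<le> b \<and> M \<le> infnorm y}.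
             ereal (infnorm y powr (- q)) * zs_ereal (F n y)) \<longlongrightarrow> MInfty) at_top"
proof -
  have "\<forall>\<^sub>F M in at_top. (SUP n. SUP y\<in>{y. y \<le> b \<and> M \<le> infnorm y}.
             ereal (infnorm y powr (- q)) * zs_ereal (F n y)) < ereal r" for r
  proof -
    define K where "K = \<bar>r\<bar> + 1"
    define \<epsilon> where "\<epsilon> = K powr (- p)"
    have \<epsilon>: "0 < \<epsilon>" and K: "\<epsilon> powr (- q) = K"
      using pq by (simp_all add: \<epsilon>_def K_def powr_powr)
    obtain N where N: "\<And>h n x. h \<le> N \<Longrightarrow> x \<in> superlevel (F n) b h \<Longrightarrow> infnorm x \<le> \<epsilon> * \<bar>real_of_int h\<bar> powr p"
      using small \<epsilon> unfolding small_superlevels_def eventually_at_bot_linorder by blast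
    define h0 where "h0 = min N (-1)"
    have bound: "(SUP n. SUP y\<in>{y. y \<le> b \<and> M \<le> infnorm y}. ereal (infnorm y powr (- q)) * zs_ereal (F n y))
        \<le> ereal (- K)" if M: "\<epsilon> * \<bar>real_of_int h0\<bar> powr p < M" for M
    proof (intro SUP_least, clarify)
      fix n y assume y: "y \<le> b" "M \<le> infnorm y"
      have "0 \<le> \<epsilon> * \<bar>real_of_int h0\<bar> powr p" using \<epsilon> by simp
      then have a: "0 < infnorm y" using M y(2) by linarith
      have low: "\<not> Fin h0 \<le> F n y"
        using N[of h0 y n] y M by (auto simp: h0_def superlevel_def)
      show "ereal (infnorm y powr (- q)) * zs_ereal (F n y) \<le> ereal (- K)"
      proof (rule growth_term_le[OF a])
        show "F n y \<noteq> Pinf" using low by auto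
        fix k assume k: "F n y = Fin k"
        then have "k < h0" using low by simp
        then have "infnorm y \<le> \<epsilon> * \<bar>real_of_int k\<bar> powr p"
          using N[of k y n] k y by (simp add: h0_def superlevel_def)
        then have "K * infnorm y powr q \<le> \<bar>real_of_int k\<bar>"
          using le_mult_powr_iff[OF infnorm_pos_le \<epsilon> abs_ge_zero p pq, of y "real_of_int k"]
          unfolding K by blast
        then show "K * infnorm y powr q \<le> - real_of_int k" using \<open>k < h0\<close> by (simp add: h0_def)
      qed
    qed
    have "ereal (- K) < ereal r" by (simp add: K_def)
    then have "(SUP n. SUP y\<in>{y. y \<le> b \<and> M \<le> infnorm y}.
        ereal (infnorm y powr (- q)) * zs_ereal (F n y)) < ereal r" if "\<epsilon> * \<bar>real_of_int h0\<bar> powr p < M" for M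
      using bound[OF that] by (rule order.strict_trans1[rotated])
    then show ?thesis by (auto intro: eventually_mono[OF eventually_gt_at_top[of "\<epsilon> * \<bar>real_of_int h0\<bar> powr p"]])
  qed
  then show ?thesis by (simp add: tendsto_MInfty)
qed

lemma Sigma_set_small_superlevels:
  fixes \<sigma> :: "real^'n::finite \<Rightarrow> int extended"
  assumes "\<sigma> \<in> Sigma_set"
  shows "small_superlevels ((real CARD('n) + 1) / real CARD('n)) (\<lambda>_. \<sigma>) b"
proof (rule growth_imp_small_superlevels)
  show "0 < (real CARD('n) + 1) / real CARD('n)" by simp
  show "(real CARD('n) + 1) / real CARD('n) * (real CARD('n) / (real CARD('n) + 1)) = 1" by simp
  have "((\<lambda>M. SUP y\<in>{y. y \<le> b \<and> M \<le> infnorm y}.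
          ereal (infnorm y powr (- real CARD('n) / (real CARD('n) + 1))) * zs_ereal (\<sigma> y)) \<longlongrightarrow> MInfty) at_top"
    using assms unfolding Sigma_set_def by blast
  then show "((\<lambda>M. SUP (n::nat). SUP y\<in>{y. y \<le> b \<and> M \<le> infnorm y}.
          ereal (infnorm y powr (- (real CARD('n) / (real CARD('n) + 1)))) * zs_ereal (\<sigma> y)) \<longlongrightarrow> MInfty) at_top"
    by simp
qed

lemma small_superlevels_bdd_below:
  assumes "small_superlevels p F b"
  shows "bdd_below (superlevel (F n) b h)"
proof -
  have "\<forall>\<^sub>F h' in at_bot. \<forall>n. \<forall>x\<in>superlevel (F n) b h'. infnorm x \<le> 1 * \<bar>real_of_int h'\<bar> powr p"
    by (rule assms[unfolded small_superlevels_def, rule_format, OF zero_less_one])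
  then obtain N where N: "\<And>h' x. h' \<le> N \<Longrightarrow> x \<in> superlevel (F n) b h' \<Longrightarrow> infnorm x \<le> \<bar>real_of_int h'\<bar> powr p"
    unfolding eventually_at_bot_linorder by auto
  have "superlevel (F n) b h \<subseteq> superlevel (F n) b (min N h)" by (rule superlevel_antimono) auto
  then have "\<forall>x\<in>superlevel (F n) b h. infnorm x \<le> \<bar>real_of_int (min N h)\<bar> powr p"
    using N[of "min N h"] by auto
  then have "\<forall>x\<in>superlevel (F n) b h. (\<chi> i. - (\<bar>real_of_int (min N h)\<bar> powr p)) \<le> x"
    using const_le_of_infnorm_le by blast
  then show ?thesis by (auto simp: bdd_below_def)
qed

section \<open>Convergence of \<Theta> forces uniformly small superlevel sets\<close>

lemma infnorm_le_of_between:
  fixes b b' :: "real^'n"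
  assumes "b \<le> b'" "b' \<le> b + 1"
  shows "infnorm b' \<le> infnorm b + 1"
  unfolding infnorm_le_iff_cart
proof
  fix i
  have "b$i \<le> b'$i" "b'$i \<le> b$i + 1" using assms by (auto simp: less_eq_vec_def)
  then show "\<bar>b'$i\<bar> \<le> infnorm b + 1" using component_le_infnorm_cart[of b i] by auto
qed

lemma emeasure_cbox_cart:
  fixes l u :: "real^'n::finite"
  assumes "\<And>i. l$i \<le> u$i"
  shows "emeasure lborel (cbox l u) = ennreal (\<Prod>i\<in>UNIV. u$i - l$i)"
proof -
  have "emeasure lborel (cbox l u) = ennreal (measure lborel (cbox l u))"
    by (rule emeasure_eq_ennreal_measure) (use emeasure_lborel_cbox_finite[of l u] in auto)
  also have "measure lborel (cbox l u) = (\<Prod>i\<in>UNIV. u$i - l$i)"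
    by (rule content_cbox_cart) (use assms in \<open>simp add: interval_ne_empty_cart\<close>)
  finally show ?thesis .
qed

lemma Theta_ge_of_theta_ge:
  fixes \<rho> \<sigma> :: "real^'n::finite \<Rightarrow> int extended"
  assumes \<epsilon>: "0 \<le> \<epsilon>" and big: "\<And>x. b \<le> x \<Longrightarrow> x \<le> b + 1 \<Longrightarrow> ennreal \<epsilon> \<le> theta x \<rho> \<sigma>"
  shows "ennreal (exp (- (infnorm b + 1)) * min 1 \<epsilon>) \<le> Theta \<rho> \<sigma>"
proof -
  define c where "c = exp (- (infnorm b + 1)) * min 1 \<epsilon>"
  have "ennreal c * indicator (cbox b (b + 1)) x \<le> ennreal (exp (- infnorm x)) * min 1 (theta x \<rho> \<sigma>)" for x
  proof (cases "x \<in> cbox b (b + 1)")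
    case True
    then have x: "b \<le> x" "x \<le> b + 1" by (auto simp: interval_cbox_cart[symmetric])
    have "ennreal c = ennreal (exp (- (infnorm b + 1))) * ennreal (min 1 \<epsilon>)"
      unfolding c_def using \<epsilon> by (simp add: ennreal_mult)
    also have "\<dots> \<le> ennreal (exp (- infnorm x)) * min 1 (theta x \<rho> \<sigma>)"
    proof (intro mult_mono)
      show "ennreal (exp (- (infnorm b + 1))) \<le> ennreal (exp (- infnorm x))"
        using infnorm_le_of_between[OF x] by (intro ennreal_leI) auto
      have "ennreal (min 1 \<epsilon>) \<le> ennreal \<epsilon>" by (intro ennreal_leI) auto
      then show "ennreal (min 1 \<epsilon>) \<le> min 1 (theta x \<rho> \<sigma>)"
        using big[OF x] by (auto intro: min.boundedI order.trans)
    qed auto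
    finally show ?thesis using True by simp
  qed simp
  then have "(\<integral>\<^sup>+x. ennreal c * indicator (cbox b (b + 1)) x \<partial>lborel) \<le> Theta \<rho> \<sigma>"
    unfolding Theta_def by (intro nn_integral_mono) auto
  moreover have "emeasure lborel (cbox b (b + 1)) = 1"
    by (subst emeasure_cbox_cart) auto
  ultimately show ?thesis by (simp add: c_def nn_integral_cmult_indicator)
qed

lemma Theta_less_imp_theta_le:
  fixes \<rho> \<sigma> :: "real^'n::finite \<Rightarrow> int extended"
  assumes \<epsilon>: "0 \<le> \<epsilon>" and Theta: "Theta \<rho> \<sigma> < ennreal (exp (- (infnorm b + 1)) * min 1 \<epsilon>)"
  shows "\<exists>b'. b \<le> b' \<and> b' \<le> b + 1 \<and> theta b' \<rho> \<sigma> \<le> ennreal \<epsilon>"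
proof (rule ccontr)
  assume "\<nexists>b'. b \<le> b' \<and> b' \<le> b + 1 \<and> theta b' \<rho> \<sigma> \<le> ennreal \<epsilon>"
  then have "ennreal \<epsilon> \<le> theta x \<rho> \<sigma>" if "b \<le> x" "x \<le> b + 1" for x
    using that by (meson linear)
  then have "ennreal (exp (- (infnorm b + 1)) * min 1 \<epsilon>) \<le> Theta \<rho> \<sigma>"
    by (rule Theta_ge_of_theta_ge[OF \<epsilon>])
  with Theta show False by simp
qed

lemma theta_term_le:
  fixes \<rho> \<sigma> :: "real^'n::finite \<Rightarrow> int extended"
  assumes "theta b \<rho> \<sigma> \<le> ennreal e" "h \<le> -1" "0 \<le> e"
  shows "\<bar>real_of_int h\<bar> powr (- (real CARD('n) + 1) / real CARD('n)) * infnorm (ybh b h \<rho> - ybh b h \<sigma>) \<le> e"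
proof -
  have "ennreal (\<bar>real_of_int h\<bar> powr (- (real CARD('n) + 1) / real CARD('n)) * infnorm (ybh b h \<rho> - ybh b h \<sigma>))
        \<le> theta b \<rho> \<sigma>"
    unfolding theta_def by (rule SUP_upper) (use assms in auto)
  with assms show ?thesis using ennreal_le_iff order_trans by metis
qed

lemma superlevel_bound_of_theta_le:
  fixes \<rho> \<sigma> :: "real^'n::finite \<Rightarrow> int extended"
  assumes theta: "theta b \<rho> \<sigma> \<le> ennreal e" and h: "h \<le> -1" and e: "0 \<le> e"
    and r: "r = e * \<bar>real_of_int h\<bar> powr ((real CARD('n) + 1) / real CARD('n))"
    and bdd: "bdd_below (superlevel \<rho> b h)"
    and \<sigma>_small: "\<forall>x\<in>superlevel \<sigma> b h. infnorm x \<le> r" and b: "infnorm b \<le> r"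
    and x: "x \<in> superlevel \<rho> b h"
  shows "infnorm x \<le> 2 * r"
proof -
  have "\<bar>real_of_int h\<bar> powr (- ((real CARD('n) + 1) / real CARD('n))) * infnorm (ybh b h \<rho> - ybh b h \<sigma>) \<le> e"
    using theta_term_le[OF theta h e] by (simp only: minus_divide_left)
  then have "infnorm (ybh b h \<rho> - ybh b h \<sigma>) \<le> r"
    using h by (simp add: powr_neg_mult_le_iff r)
  moreover have "infnorm (ybh b h \<sigma>) \<le> r" using infnorm_ybh_le[OF \<sigma>_small] b by simp
  moreover have "infnorm (ybh b h \<rho>) \<le> infnorm (ybh b h \<sigma>) + infnorm (ybh b h \<rho> - ybh b h \<sigma>)"
    using infnorm_triangle[of "ybh b h \<sigma>" "ybh b h \<rho> - ybh b h \<sigma>"] by simp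
  ultimately show ?thesis using infnorm_le_ybh[OF bdd x] b infnorm_pos_le[of b] by (auto simp: le_max_iff_disj)
qed

lemma Theta_tendsto_0_imp_small_superlevels:
  fixes \<sigma>s :: "nat \<Rightarrow> real^'n::finite \<Rightarrow> int extended" and \<sigma> :: "real^'n \<Rightarrow> int extended"
  defines "p \<equiv> (real CARD('n) + 1) / real CARD('n)"
  assumes each: "\<And>n b. small_superlevels p (\<lambda>_. \<sigma>s n) b"
    and lim: "small_superlevels p (\<lambda>_. \<sigma>) (b + 1)"
    and Theta: "(\<lambda>n. Theta (\<sigma>s n) \<sigma>) \<longlonglongrightarrow> 0"
  shows "small_superlevels p \<sigma>s b"
  unfolding small_superlevels_def
proof (intro allI impI)
  fix \<epsilon> :: real assume \<epsilon>: "\<epsilon> > 0"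
  define e where "e = \<epsilon> / 2"
  have e: "e > 0" using \<epsilon> by (simp add: e_def)
  have "\<forall>\<^sub>F n in sequentially. Theta (\<sigma>s n) \<sigma> < ennreal (exp (- (infnorm b + 1)) * min 1 e)"
    using Theta e by (intro order_tendstoD(2)) auto
  then obtain N where N: "\<And>n. n \<ge> N \<Longrightarrow> Theta (\<sigma>s n) \<sigma> < ennreal (exp (- (infnorm b + 1)) * min 1 e)"
    unfolding eventually_sequentially by auto
  have "\<exists>b'. b \<le> b' \<and> b' \<le> b + 1 \<and> theta b' (\<sigma>s n) \<sigma> \<le> ennreal e" if "n \<ge> N" for n
    using e by (intro Theta_less_imp_theta_le N that) simp
  then obtain B where B: "\<And>n. n \<ge> N \<Longrightarrow> b \<le> B n \<and> B n \<le> b + 1 \<and> theta (B n) (\<sigma>s n) \<sigma> \<le> ennreal e"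
    by metis
  have "\<forall>\<^sub>F h in at_bot. (\<forall>x\<in>superlevel \<sigma> (b + 1) h. infnorm x \<le> e * \<bar>real_of_int h\<bar> powr p)
      \<and> (\<forall>n\<in>{..<N}. \<forall>x\<in>superlevel (\<sigma>s n) b h. infnorm x \<le> \<epsilon> * \<bar>real_of_int h\<bar> powr p)
      \<and> infnorm b + 1 \<le> e * \<bar>real_of_int h\<bar> powr p \<and> h \<le> -1"
    using lim each e \<epsilon> unfolding small_superlevels_def p_def
    by (intro eventually_conj eventually_ball_finite eventually_le_mult_abs_powr eventually_le_at_bot)
      auto
  then show "\<forall>\<^sub>F h in at_bot. \<forall>n. \<forall>x\<in>superlevel (\<sigma>s n) b h. infnorm x \<le> \<epsilon> * \<bar>real_of_int h\<bar> powr p"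
  proof eventually_elim
    case (elim h)
    show ?case
    proof (intro allI ballI)
      fix n x assume x: "x \<in> superlevel (\<sigma>s n) b h"
      show "infnorm x \<le> \<epsilon> * \<bar>real_of_int h\<bar> powr p"
      proof (cases "n < N")
        case False
        then have Bn: "b \<le> B n" "B n \<le> b + 1" "theta (B n) (\<sigma>s n) \<sigma> \<le> ennreal e" using B by auto
        have "infnorm x \<le> 2 * (e * \<bar>real_of_int h\<bar> powr p)"
        proof (rule superlevel_bound_of_theta_le[OF Bn(3)])
          show "bdd_below (superlevel (\<sigma>s n) (B n) h)" by (rule small_superlevels_bdd_below[OF each])
          show "\<forall>x\<in>superlevel \<sigma> (B n) h. infnorm x \<le> e * \<bar>real_of_int h\<bar> powr p"
            using elim superlevel_antimono[OF order_refl Bn(2)] by blast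
          show "infnorm (B n) \<le> e * \<bar>real_of_int h\<bar> powr p"
            using elim infnorm_le_of_between[OF Bn(1,2)] by linarith
          show "x \<in> superlevel (\<sigma>s n) (B n) h" using x superlevel_antimono[OF order_refl Bn(1)] by blast
        qed (use elim e in \<open>simp_all add: p_def\<close>)
        then show ?thesis by (simp add: e_def)
      qed (use elim x in auto)
    qed
  qed
qed

section \<open>Uniformly small superlevel sets force convergence of \<Theta>\<close>

lemma nn_integral_exp_abs_finite:
  fixes a :: real
  assumes a: "a > 0"
  shows "(\<integral>\<^sup>+t. ennreal (exp (- a * \<bar>t\<bar>)) \<partial>lborel) < top"
proof -
  define g where "g k t = ennreal (exp (- a * real k)) * (indicator {real k..real k + 1} t + indicator {- (real k + 1)..- real k} t)" for k :: nat and t :: real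
  have pw: "ennreal (exp (- a * \<bar>t\<bar>)) \<le> (\<Sum>k. g k t)" for t
  proof -
    define k where "k = nat \<lfloor>\<bar>t\<bar>\<rfloor>"
    have k1: "real k \<le> \<bar>t\<bar>" "\<bar>t\<bar> \<le> real k + 1" unfolding k_def by linarith+
    have "ennreal (exp (- a * \<bar>t\<bar>)) \<le> g k t"
    proof -
      have "exp (- a * \<bar>t\<bar>) \<le> exp (- a * real k)" using k1 a by auto
      moreover have "1 \<le> indicator {real k..real k + 1} t + (indicator {- (real k + 1)..- real k} t :: ennreal)"
        using k1 by (cases "t \<ge> 0") (auto simp: indicator_def)
      ultimately have "ennreal (exp (- a * \<bar>t\<bar>)) * 1 \<le> ennreal (exp (- a * real k)) * (indicator {real k..real k + 1} t + indicator {- (real k + 1)..- real k} t)"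
        by (intro mult_mono) (auto intro: ennreal_leI)
      then show ?thesis by (simp add: g_def)
    qed
    also have "g k t \<le> (\<Sum>k. g k t)"
      using sum_le_suminf[of "\<lambda>k. g k t" "{k}"] by auto
    finally show ?thesis .
  qed
  have "(\<integral>\<^sup>+t. ennreal (exp (- a * \<bar>t\<bar>)) \<partial>lborel) \<le> (\<integral>\<^sup>+t. (\<Sum>k. g k t) \<partial>lborel)"
    by (intro nn_integral_mono pw)
  also have "\<dots> = (\<Sum>k. \<integral>\<^sup>+t. g k t \<partial>lborel)"
    by (rule nn_integral_suminf) (simp add: g_def)
  also have "(\<lambda>k. \<integral>\<^sup>+t. g k t \<partial>lborel) = (\<lambda>k. ennreal (2 * exp (- a) ^ k))"
  proof
    fix k
    have "(\<integral>\<^sup>+t. g k t \<partial>lborel) = ennreal (exp (- a * real k)) * ((\<integral>\<^sup>+t. indicator {real k..real k + 1} t \<partial>lborel) + (\<integral>\<^sup>+t. indicator {- (real k + 1)..- real k} t \<partial>lborel))"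
      unfolding g_def by (simp add: nn_integral_cmult nn_integral_add)
    also have "\<dots> = ennreal (exp (- a * real k)) * 2" by simp
    also have "exp (- a * real k) = exp (- a) ^ k" using exp_of_nat_mult[of k "- a"] by (simp add: mult.commute)
    finally show "(\<integral>\<^sup>+t. g k t \<partial>lborel) = ennreal (2 * exp (- a) ^ k)"
      by (simp add: ennreal_mult mult.commute)
  qed
  also have "(\<Sum>k. ennreal (2 * exp (- a) ^ k)) = ennreal (\<Sum>k. 2 * exp (- a) ^ k)"
    using a by (intro suminf_ennreal2) (auto intro!: summable_mult summable_geometric)
  also have "\<dots> < top" by simp
  finally show ?thesis .
qed

lemma nn_integral_exp_infnorm_finite:
  assumes c: "c > 0"
  shows "(\<integral>\<^sup>+x. ennreal (exp (- c * infnorm (x::'a::euclidean_space))) \<partial>lborel) < top"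
proof -
  define a where "a = c / real DIM('a)"
  have a: "a > 0" using c by (simp add: a_def)
  have pw: "ennreal (exp (- c * infnorm x)) \<le> (\<Prod>b\<in>Basis. ennreal (exp (- a * \<bar>x \<bullet> b\<bar>)))" for x :: 'a
  proof -
    have "(\<Sum>b\<in>Basis. \<bar>x \<bullet> b\<bar>) \<le> of_nat (card (Basis :: 'a set)) * infnorm x"
      by (rule sum_bounded_above) (rule Basis_le_infnorm)
    then have "a * (\<Sum>b\<in>Basis. \<bar>x \<bullet> b\<bar>) \<le> a * (real DIM('a) * infnorm x)"
      using a by (intro mult_left_mono) auto
    also have "\<dots> = c * infnorm x" by (simp add: a_def)
    finally have h: "a * (\<Sum>b\<in>Basis. \<bar>x \<bullet> b\<bar>) \<le> c * infnorm x" .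
    have "(\<Sum>b\<in>Basis. - a * \<bar>x \<bullet> b\<bar>) = - (a * (\<Sum>b\<in>Basis. \<bar>x \<bullet> b\<bar>))"
      by (simp add: sum_distrib_left sum_negf)
    with h have "- c * infnorm x \<le> (\<Sum>b\<in>Basis. - a * \<bar>x \<bullet> b\<bar>)" by linarith
    then have "exp (- c * infnorm x) \<le> exp (\<Sum>b\<in>Basis. - a * \<bar>x \<bullet> b\<bar>)" by simp
    also have "\<dots> = (\<Prod>b\<in>Basis. exp (- a * \<bar>x \<bullet> b\<bar>))" by (simp add: exp_sum)
    finally show ?thesis by (simp add: prod_ennreal ennreal_leI)
  qed
  have "(\<integral>\<^sup>+x. ennreal (exp (- c * infnorm (x::'a))) \<partial>lborel) \<le> (\<integral>\<^sup>+x. (\<Prod>b\<in>Basis. ennreal (exp (- a * \<bar>(x::'a) \<bullet> b\<bar>))) \<partial>lborel)"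
    by (intro nn_integral_mono pw)
  also have "\<dots> = (\<Prod>b\<in>(Basis::'a set). (\<integral>\<^sup>+t. ennreal (exp (- a * \<bar>t\<bar>)) \<partial>lborel))"
    by (rule nn_integral_lborel_prod[where f = "\<lambda>b t. ennreal (exp (- a * \<bar>t\<bar>))"]) auto
  also have "\<dots> < top"
    using nn_integral_exp_abs_finite[OF a] by (simp add: less_top[symmetric] power_eq_top_ennreal)
  finally show ?thesis .
qed

lemma clamp_nth: "clamp u x $ i = max (min (x$i) u) (- u)"
  by (simp add: clamp_def)

lemma clamp_eq_self:
  assumes "infnorm x \<le> u" shows "clamp u x = x"
proof -
  have x: "\<bar>x$i\<bar> \<le> u" for i using assms component_le_infnorm_cart order_trans by blast
  have "max (min (x$i) u) (- u) = x$i" for i using x[of i] by (simp add: abs_le_iff)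
  then show ?thesis by (simp add: clamp_def vec_eq_iff)
qed

lemma clamp_eq_self_if_close:
  fixes w z :: "real^'n::finite"
  assumes "infnorm z \<le> u - 1" and "infnorm (clamp u w - z) \<le> \<eta>" and "\<eta> < 1"
  shows "clamp u w = w"
proof -
  have "\<bar>w$i\<bar> \<le> u" for i
  proof -
    have "\<bar>max (min (w$i) u) (- u) - z$i\<bar> \<le> \<eta>"
      using assms(2) component_le_infnorm_cart[of "clamp u w - z" i] by (simp add: clamp_nth)
    then show ?thesis
      using assms(1,3) component_le_infnorm_cart[of z i] unfolding abs_le_iff max_def min_def
      by (auto split: if_splits)
  qed
  then show ?thesis by (simp add: clamp_eq_self infnorm_le_iff_cart)
qed

lemma infnorm_clamp_diff_mono:
  fixes x y :: "real^'n::finite"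
  assumes "0 \<le> u" "u \<le> u'"
  shows "infnorm (clamp u x - clamp u y) \<le> infnorm (clamp u' x - clamp u' y)"
  unfolding infnorm_le_iff_cart
proof
  fix i
  have "\<bar>(clamp u x - clamp u y) $ i\<bar> \<le> \<bar>(clamp u' x - clamp u' y) $ i\<bar>"
    using assms by (simp add: clamp_nth max_def min_def)
  then show "\<bar>(clamp u x - clamp u y) $ i\<bar> \<le> infnorm (clamp u' x - clamp u' y)"
    using component_le_infnorm_cart order_trans by blast
qed

lemma nn_integral_Ici_ge_const_Icc:
  fixes f :: "real \<Rightarrow> ennreal"
  assumes "0 \<le> A" "A \<le> B" and "\<And>u. A \<le> u \<Longrightarrow> u \<le> B \<Longrightarrow> ennreal c \<le> f u"
  shows "ennreal c * ennreal (B - A) \<le> (\<integral>\<^sup>+u\<in>{0..}. f u \<partial>lborel)"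
proof -
  have "(\<integral>\<^sup>+u. ennreal c * indicator {A..B} u \<partial>lborel) \<le> (\<integral>\<^sup>+u\<in>{0..}. f u \<partial>lborel)"
    by (intro nn_integral_mono) (use assms in \<open>auto simp: indicator_def\<close>)
  then show ?thesis using assms by (simp add: nn_integral_cmult_indicator)
qed

(* The distortion is monotone in the clamping radius, so if it exceeded eta at radius U + 1 it would
   do so on all of [U + 1, U + 2], contributing at least exp (-(U + 2)) * min 1 eta to gamma. *)
lemma clamp_distortion_le_of_gamma_less:
  fixes lam :: "'n::finite \<Rightarrow> real \<Rightarrow> real"
  assumes gamma: "gamma lam < ennreal (exp (- (U + 2)) * min 1 \<eta>)" and U: "0 \<le> U" and \<eta>: "0 < \<eta>"
    and u: "0 \<le> u" "u \<le> U + 1"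
  shows "infnorm (clamp u (apply_tc lam x) - clamp u x) \<le> \<eta>"
proof -
  define s where "s u = (SUP x::real^'n. ennreal (infnorm (clamp u (apply_tc lam x) - clamp u x)))" for u
  have s_mono: "s u \<le> s u'" if "0 \<le> u" "u \<le> u'" for u u'
    unfolding s_def by (intro SUP_mono) (use infnorm_clamp_diff_mono[OF that] in \<open>auto intro: ennreal_leI\<close>)
  have "s (U + 1) \<le> ennreal \<eta>"
  proof (rule ccontr)
    assume "\<not> s (U + 1) \<le> ennreal \<eta>"
    then have big: "ennreal \<eta> < s u'" if "U + 1 \<le> u'" for u'
      using s_mono[OF _ that] U by (meson add_nonneg_nonneg not_le order.strict_trans2 zero_le_one)
    have "ennreal (exp (- (U + 2)) * min 1 \<eta>) * ennreal ((U + 2) - (U + 1))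
        \<le> (\<integral>\<^sup>+u\<in>{0..}. ennreal (exp (-u)) * min 1 (s u) \<partial>lborel)"
    proof (rule nn_integral_Ici_ge_const_Icc)
      fix u' assume u': "U + 1 \<le> u'" "u' \<le> U + 2"
      have "ennreal (min 1 \<eta>) \<le> min 1 (s u')"
      proof (rule min.boundedI)
        have "ennreal (min 1 \<eta>) \<le> ennreal \<eta>" by (intro ennreal_leI) auto
        then show "ennreal (min 1 \<eta>) \<le> s u'" using big[OF u'(1)] by simp
      qed simp
      moreover have "ennreal (exp (- (U + 2))) \<le> ennreal (exp (- u'))" using u' by (intro ennreal_leI) auto
      ultimately show "ennreal (exp (- (U + 2)) * min 1 \<eta>) \<le> ennreal (exp (- u')) * min 1 (s u')"
        using \<eta> by (simp add: ennreal_mult mult_mono)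
    qed (use U in auto)
    also have "\<dots> \<le> gamma lam" unfolding gamma_def s_def by (rule add_increasing) auto
    finally show False using gamma by simp
  qed
  moreover have "ennreal (infnorm (clamp u (apply_tc lam x) - clamp u x)) \<le> s (U + 1)"
    unfolding s_def
    by (rule SUP_upper2[of x]) (use infnorm_clamp_diff_mono[OF u] in \<open>auto intro: ennreal_leI\<close>)
  ultimately show ?thesis using \<eta> by (simp add: ennreal_le_iff[symmetric] del: ennreal_le_iff)
qed

lemma exists_clamp_agreement:
  fixes \<rho> \<sigma> :: "real^'n::finite \<Rightarrow> int extended"
  assumes mismatch: "(\<integral>\<^sup>+ u\<in>{0..}. ennreal (exp (-u)) *
          (SUP x::real^'n. (if \<rho> (clamp u x) \<noteq> \<sigma> (clamp u (apply_tc lam x)) then 1 else 0)) \<partial>lborel)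
        < ennreal (exp (- (U + 1)))"
    and U: "0 \<le> U"
  obtains u where "U \<le> u" "u \<le> U + 1" "\<forall>x. \<rho> (clamp u x) = \<sigma> (clamp u (apply_tc lam x))"
proof (rule ccontr)
  assume none: "\<not> thesis"
  have "ennreal (exp (- (U + 1))) * ennreal ((U + 1) - U) \<le> (\<integral>\<^sup>+ u\<in>{0..}. ennreal (exp (-u)) *
          (SUP x::real^'n. (if \<rho> (clamp u x) \<noteq> \<sigma> (clamp u (apply_tc lam x)) then 1 else 0)) \<partial>lborel)"
  proof (rule nn_integral_Ici_ge_const_Icc)
    fix u assume u: "U \<le> u" "u \<le> U + 1"
    have "\<not> (\<forall>x. \<rho> (clamp u x) = \<sigma> (clamp u (apply_tc lam x)))" using none that u by blast
    then obtain x where "\<rho> (clamp u x) \<noteq> \<sigma> (clamp u (apply_tc lam x))" by blast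
    then have "(1::ennreal) \<le> (SUP x::real^'n. (if \<rho> (clamp u x) \<noteq> \<sigma> (clamp u (apply_tc lam x)) then 1 else 0))"
      by (intro SUP_upper2[of x]) auto
    moreover have "ennreal (exp (- (U + 1))) \<le> ennreal (exp (- u))" using u by (intro ennreal_leI) auto
    ultimately show "ennreal (exp (- (U + 1))) \<le> ennreal (exp (-u)) *
        (SUP x::real^'n. (if \<rho> (clamp u x) \<noteq> \<sigma> (clamp u (apply_tc lam x)) then 1 else 0))"
      using mult_mono[of "ennreal (exp (- (U + 1)))" _ 1] by fastforce
  qed (use U in auto)
  then show False using mismatch by simp
qed

lemma dS_less_obtains_time_change:
  fixes \<rho> \<sigma> :: "real^'n::finite \<Rightarrow> int extended"
  assumes dS: "dS \<rho> \<sigma> < ennreal (exp (- (U + 2)) * min 1 \<eta>)" and U: "0 \<le> U" and \<eta>: "0 < \<eta>"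
  obtains lam u where "lam \<in> Lambda" "U \<le> u" "u \<le> U + 1"
    "\<forall>x. \<rho> (clamp u x) = \<sigma> (clamp u (apply_tc lam x))"
    "\<forall>x. infnorm (clamp u (apply_tc lam x) - clamp u x) \<le> \<eta>"
proof -
  obtain lam where lam: "lam \<in> Lambda"
    and less: "max (gamma lam) (\<integral>\<^sup>+ u\<in>{0..}. ennreal (exp (-u)) *
          (SUP x::real^'n. (if \<rho> (clamp u x) \<noteq> \<sigma> (clamp u (apply_tc lam x)) then 1 else 0)) \<partial>lborel)
        < ennreal (exp (- (U + 2)) * min 1 \<eta>)"
    using INF_less_iff[THEN iffD1, OF dS[unfolded dS_def]] by (rule bexE)
  have "exp (- (U + 2)) * min 1 \<eta> \<le> exp (- (U + 2))" using \<eta> by (intro mult_left_le) auto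
  also have "\<dots> \<le> exp (- (U + 1))" by simp
  finally have t: "ennreal (exp (- (U + 2)) * min 1 \<eta>) \<le> ennreal (exp (- (U + 1)))" by (rule ennreal_leI)
  have "(\<integral>\<^sup>+ u\<in>{0..}. ennreal (exp (-u)) *
          (SUP x::real^'n. (if \<rho> (clamp u x) \<noteq> \<sigma> (clamp u (apply_tc lam x)) then 1 else 0)) \<partial>lborel)
        < ennreal (exp (- (U + 2)) * min 1 \<eta>)"
    using less unfolding max_less_iff_conj by (rule conjunct2)
  then have "(\<integral>\<^sup>+ u\<in>{0..}. ennreal (exp (-u)) *
          (SUP x::real^'n. (if \<rho> (clamp u x) \<noteq> \<sigma> (clamp u (apply_tc lam x)) then 1 else 0)) \<partial>lborel)
        < ennreal (exp (- (U + 1)))"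
    using t by (rule order.strict_trans2)
  then obtain u where u: "U \<le> u" "u \<le> U + 1" "\<forall>x. \<rho> (clamp u x) = \<sigma> (clamp u (apply_tc lam x))"
    using exists_clamp_agreement[OF _ U] by blast
  have "gamma lam < ennreal (exp (- (U + 2)) * min 1 \<eta>)"
    using less unfolding max_less_iff_conj by (rule conjunct1)
  then have "\<forall>x. infnorm (clamp u (apply_tc lam x) - clamp u x) \<le> \<eta>"
    using U u by (intro allI clamp_distortion_le_of_gamma_less[OF _ U \<eta>]) auto
  with lam u show ?thesis by (rule that)
qed

lemma time_change_agrees_near:
  fixes \<rho> \<sigma> :: "real^'n::finite \<Rightarrow> int extended"
  assumes agree: "\<forall>x. \<rho> (clamp u x) = \<sigma> (clamp u (apply_tc lam x))"
    and close: "\<forall>x. infnorm (clamp u (apply_tc lam x) - clamp u x) \<le> \<eta>" and \<eta>: "\<eta> < 1"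
    and near: "infnorm x \<le> u - 1 \<or> infnorm (apply_tc lam x) \<le> u - 1"
  shows "\<rho> x = \<sigma> (apply_tc lam x)" and "infnorm (apply_tc lam x - x) \<le> \<eta>"
proof -
  have "clamp u x = x \<and> clamp u (apply_tc lam x) = apply_tc lam x"
    using near
  proof
    assume x: "infnorm x \<le> u - 1"
    then have "clamp u x = x" by (intro clamp_eq_self) simp
    with x show ?thesis using close \<eta> clamp_eq_self_if_close by metis
  next
    assume x: "infnorm (apply_tc lam x) \<le> u - 1"
    then have fx: "clamp u (apply_tc lam x) = apply_tc lam x" by (intro clamp_eq_self) simp
    then have "infnorm (clamp u x - apply_tc lam x) \<le> \<eta>"
      using close[rule_format, of x] by (simp add: infnorm_sub)
    with fx show ?thesis using clamp_eq_self_if_close[OF x _ \<eta>] by blast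
  qed
  then show "\<rho> x = \<sigma> (apply_tc lam x)" "infnorm (apply_tc lam x - x) \<le> \<eta>"
    using agree close by metis+
qed

lemma apply_tc_le_iff: "lam \<in> Lambda \<Longrightarrow> apply_tc lam x \<le> apply_tc lam y \<longleftrightarrow> x \<le> y"
  by (simp add: Lambda_def less_eq_vec_def apply_tc_def strict_mono_less_eq)

lemma apply_tc_surj: "lam \<in> Lambda \<Longrightarrow> \<exists>x. apply_tc lam x = z"
  by (rule exI[of _ "\<chi> i. inv (lam i) (z$i)"])
    (simp add: Lambda_def apply_tc_def vec_eq_iff bij_is_surj surj_f_inv_f)

lemma bdd_below_of_infnorm_le: "(\<And>x. x \<in> E \<Longrightarrow> infnorm x \<le> r) \<Longrightarrow> bdd_below (E :: (real^'n) set)"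
  using const_le_of_infnorm_le unfolding bdd_below_def by blast

lemma infnorm_ybh_time_change_le:
  fixes \<rho> \<sigma> :: "real^'n::finite \<Rightarrow> int extended"
  assumes lam: "lam \<in> Lambda"
    and agree: "\<forall>x. \<rho> (clamp u x) = \<sigma> (clamp u (apply_tc lam x))"
    and close: "\<forall>x. infnorm (clamp u (apply_tc lam x) - clamp u x) \<le> \<eta>" and \<eta>: "\<eta> < 1"
    and b: "infnorm b \<le> u - 1"
    and in1: "\<And>x. x \<in> superlevel \<rho> b h \<Longrightarrow> infnorm x \<le> u - 1"
    and in2: "\<And>x. x \<in> superlevel \<sigma> (apply_tc lam b) h \<Longrightarrow> infnorm x \<le> u - 1"
  shows "infnorm (ybh b h \<rho> - ybh (apply_tc lam b) h \<sigma>) \<le> \<eta>"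
proof (rule infnorm_ybh_diff_le)
  note transfer = time_change_agrees_near[OF agree close \<eta>]
  have shift: "y$i \<le> x$i + \<eta>" if "infnorm (y - x) \<le> \<eta>" for x y :: "real^'n" and i
    using that component_le_infnorm_cart[of "y - x" i] by simp
  show "bdd_below (superlevel \<rho> b h)" using in1 by (rule bdd_below_of_infnorm_le)
  show "bdd_below (superlevel \<sigma> (apply_tc lam b) h)" using in2 by (rule bdd_below_of_infnorm_le)
  show "\<exists>x'\<in>superlevel \<sigma> (apply_tc lam b) h. \<forall>i. x'$i \<le> x$i + \<eta>" if x: "x \<in> superlevel \<rho> b h" for x
  proof (intro bexI allI)
    have near: "infnorm x \<le> u - 1 \<or> infnorm (apply_tc lam x) \<le> u - 1" using in1[OF x] by simp
    show "apply_tc lam x $ i \<le> x $ i + \<eta>" for i using transfer(2)[OF near] by (rule shift)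
    show "apply_tc lam x \<in> superlevel \<sigma> (apply_tc lam b) h"
      using x transfer(1)[OF near] by (simp add: superlevel_def apply_tc_le_iff[OF lam])
  qed
  show "\<exists>x\<in>superlevel \<rho> b h. \<forall>i. x$i \<le> x'$i + \<eta>" if x': "x' \<in> superlevel \<sigma> (apply_tc lam b) h" for x'
  proof -
    obtain x where x: "apply_tc lam x = x'" using apply_tc_surj[OF lam] by blast
    then have near: "infnorm x \<le> u - 1 \<or> infnorm (apply_tc lam x) \<le> u - 1" using in2[OF x'] by simp
    show ?thesis
    proof (intro bexI allI)
      show "x $ i \<le> x' $ i + \<eta>" for i
        using transfer(2)[OF near] x by (intro shift) (simp add: infnorm_sub)
      show "x \<in> superlevel \<rho> b h"
        using x' x transfer(1)[OF near] apply_tc_le_iff[OF lam, of x b] by (auto simp: superlevel_def)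
    qed
  qed
  show "infnorm (b - apply_tc lam b) \<le> \<eta>" using transfer(2)[of b] b by (simp add: infnorm_sub)
qed

definition constant_on_cells :: "('n \<Rightarrow> real set) \<Rightarrow> real^'n \<Rightarrow> real^'n \<Rightarrow> (real^'n::finite \<Rightarrow> 'a) \<Rightarrow> bool" where
  "constant_on_cells S a c \<sigma> \<longleftrightarrow> (\<forall>x y. (\<forall>i. a$i \<le> x$i \<and> x$i < c$i) \<longrightarrow> (\<forall>i. a$i \<le> y$i \<and> y$i < c$i) \<longrightarrow>
     same_cell S x y \<longrightarrow> \<sigma> x = \<sigma> y)"

lemma in_D_obtains_cells:
  assumes "in_D \<sigma>" "\<And>i. a$i < c$i"
  obtains S where "\<And>i. finite (S i)" "constant_on_cells S a c \<sigma>"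
proof -
  obtain S where "\<forall>i. finite (S i) \<and> a$i \<in> S i \<and> c$i \<in> S i \<and> S i \<subseteq> {a$i..c$i}"
    and "constant_on_cells S a c \<sigma>"
    using assms(1)[unfolded in_D_def, rule_format, OF assms(2)] unfolding constant_on_cells_def by blast
  then show ?thesis using that by blast
qed

lemma superlevel_shift_in_cell:
  fixes \<sigma> :: "real^'n::finite \<Rightarrow> int extended"
  assumes cells: "constant_on_cells S a c \<sigma>"
    and bc: "\<And>i. b$i < c$i" and ab': "\<And>i. a$i \<le> b'$i"
    and no_cut: "\<And>i s. s \<in> S i \<Longrightarrow> \<not> (b'$i < s \<and> s \<le> b$i)"
    and ax: "a \<le> x" and x: "x \<in> superlevel \<sigma> b h"
  shows "\<exists>x'\<in>superlevel \<sigma> b' h. x' \<le> x"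
proof -
  define x' :: "real^'n" where "x' = (\<chi> j. min (x$j) (b'$j))"
  have xb: "x$i \<le> b$i" for i using x by (simp add: superlevel_def less_eq_vec_def)
  have "\<sigma> x' = \<sigma> x"
  proof (rule cells[unfolded constant_on_cells_def, rule_format])
    show "a$i \<le> x'$i \<and> x'$i < c$i" "a$i \<le> x$i \<and> x$i < c$i" for i
      using ax ab'[of i] xb[of i] bc[of i] by (auto simp: x'_def less_eq_vec_def)
    show "same_cell S x' x"
      unfolding same_cell_def
    proof (intro allI ballI conjI notI)
      fix i s assume s: "s \<in> S i"
      show False if "x'$i < s \<and> s \<le> x$i"
      proof -
        have "x'$i = b'$i" using that by (auto simp: x'_def min_def split: if_splits)
        then show False using that xb[of i] no_cut[OF s] by auto
      qed
      show False if "x$i < s \<and> s \<le> x'$i" using that by (auto simp: x'_def)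
    qed
  qed
  then show ?thesis using x by (intro bexI[of _ x']) (auto simp: x'_def superlevel_def less_eq_vec_def)
qed

lemma nth_le_add_of_le: "x' \<le> x \<Longrightarrow> 0 \<le> \<eta> \<Longrightarrow> x'$i \<le> x$i + (\<eta>::real)"
  by (simp add: less_eq_vec_def add_increasing2)

lemma infnorm_ybh_diff_le_no_cut:
  fixes \<sigma> :: "real^'n::finite \<Rightarrow> int extended"
  assumes cells: "constant_on_cells S a c \<sigma>"
    and "\<And>i. a$i \<le> b$i \<and> b$i < c$i" "\<And>i. a$i \<le> b'$i \<and> b'$i < c$i"
    and no_cut: "\<And>i s. s \<in> S i \<Longrightarrow> \<not> (min (b$i) (b'$i) < s \<and> s \<le> max (b$i) (b'$i))"
    and low: "\<And>x. x \<in> superlevel \<sigma> b h \<Longrightarrow> a \<le> x" "\<And>x. x \<in> superlevel \<sigma> b' h \<Longrightarrow> a \<le> x"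
  shows "infnorm (ybh b h \<sigma> - ybh b' h \<sigma>) \<le> infnorm (b - b')"
proof (rule infnorm_ybh_diff_le)
  show "bdd_below (superlevel \<sigma> b h)" "bdd_below (superlevel \<sigma> b' h)"
    using low unfolding bdd_below_def by blast+
  have cut1: "\<not> (b'$i < s \<and> s \<le> b$i)" and cut2: "\<not> (b$i < s \<and> s \<le> b'$i)" if "s \<in> S i" for i s
    using no_cut[OF that] by (auto simp: min_def max_def split: if_splits)
  have "\<exists>x'\<in>superlevel \<sigma> b' h. x' \<le> x" if "x \<in> superlevel \<sigma> b h" for x
    using that assms(2,3) cut1 low(1)[OF that] by (intro superlevel_shift_in_cell[OF cells]) auto
  then show "\<exists>x'\<in>superlevel \<sigma> b' h. \<forall>i. x'$i \<le> x$i + infnorm (b - b')" if "x \<in> superlevel \<sigma> b h" for x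
    using that nth_le_add_of_le[OF _ infnorm_pos_le] by blast
  have "\<exists>x'\<in>superlevel \<sigma> b h. x' \<le> x" if "x \<in> superlevel \<sigma> b' h" for x
    using that assms(2,3) cut2 low(2)[OF that] by (intro superlevel_shift_in_cell[OF cells]) auto
  then show "\<exists>x'\<in>superlevel \<sigma> b h. \<forall>i. x'$i \<le> x$i + infnorm (b - b')" if "x \<in> superlevel \<sigma> b' h" for x
    using that nth_le_add_of_le[OF _ infnorm_pos_le] by blast
qed simp

definition slab :: "('n \<Rightarrow> real set) \<Rightarrow> real \<Rightarrow> real \<Rightarrow> (real^'n::finite) set" where
  "slab S \<delta> R = (\<Union>p\<in>(SIGMA i:UNIV. S i). cbox (\<chi> j. if j = fst p then snd p - \<delta> else - R) (\<chi> j. if j = fst p then snd p + \<delta> else R))"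

lemma slab_coordinate_far:
  fixes b :: "real^'n::finite"
  assumes "b \<notin> slab S \<delta> R" "infnorm b \<le> R" "s \<in> S i"
  shows "\<delta> < \<bar>b$i - s\<bar>"
proof (rule ccontr)
  assume "\<not> \<delta> < \<bar>b$i - s\<bar>"
  have bj: "- R \<le> b$j" "b$j \<le> R" for j
    using assms(2) component_le_infnorm_cart[of b j] by linarith+
  from \<open>\<not> \<delta> < \<bar>b$i - s\<bar>\<close> bj have "b \<in> cbox (\<chi> j. if j = i then s - \<delta> else - R) (\<chi> j. if j = i then s + \<delta> else R)"
    by (auto simp: mem_box_cart abs_le_iff)
  moreover have "(i, s) \<in> (SIGMA i:UNIV. S i)" using assms(3) by auto
  ultimately have "b \<in> slab S \<delta> R" unfolding slab_def
    by (intro UN_I[of "(i, s)"]) (simp_all only: fst_conv snd_conv)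
  then show False using assms(1) by blast
qed

lemma emeasure_slab_le:
  fixes S :: "'n::finite \<Rightarrow> real set"
  assumes fin: "\<And>i. finite (S i)" and d: "0 \<le> \<delta>" and R: "0 \<le> R"
  shows "emeasure lborel (slab S \<delta> R) \<le> ennreal (real (\<Sum>i\<in>UNIV. card (S i)) * ((2 * \<delta>) * (2 * R + 1) ^ CARD('n)))"
proof -
  define I where "I = (SIGMA i:UNIV. S i)"
  define B where "B p = cbox (\<chi> j. if j = fst p then snd p - \<delta> else - R) (\<chi> j. if j = fst p then snd p + \<delta> else R :: real^'n)" for p
  have finI: "finite I" unfolding I_def using fin by auto
  have cI: "card I = (\<Sum>i\<in>UNIV. card (S i))" unfolding I_def using fin by (simp add: card_SigmaI)
  have Bm: "emeasure lborel (B p) \<le> ennreal ((2 * \<delta>) * (2 * R + 1) ^ CARD('n))" for p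
  proof -
    obtain i s where p: "p = (i, s)" by (cases p)
    define g where "g j = (if j = i then 2 * \<delta> else 2 * R)" for j
    have em: "emeasure lborel (B p) = ennreal (\<Prod>j\<in>UNIV. g j)"
      unfolding B_def p using d R by (subst emeasure_cbox_cart) (auto simp: g_def intro!: arg_cong[where f = ennreal] prod.cong)
    have "(\<Prod>j\<in>UNIV. g j) = g i * (\<Prod>j\<in>UNIV - {i}. g j)" by (rule prod.remove) auto
    also have "(\<Prod>j\<in>UNIV - {i}. g j) = (2 * R) ^ card (UNIV - {i})" by (simp add: g_def)
    finally have pr: "(\<Prod>j\<in>UNIV. g j) = (2 * \<delta>) * (2 * R) ^ card (UNIV - {i})" by (simp add: g_def)
    have "(2 * R) ^ card (UNIV - {i} :: 'n set) \<le> (2 * R + 1) ^ card (UNIV - {i} :: 'n set)"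
      using R by (intro power_mono) auto
    also have "\<dots> \<le> (2 * R + 1) ^ CARD('n)"
      using R by (intro power_increasing) (auto simp: card_Diff_subset)
    finally have "(2 * \<delta>) * (2 * R) ^ card (UNIV - {i} :: 'n set) \<le> (2 * \<delta>) * (2 * R + 1) ^ CARD('n)"
      using d by (intro mult_left_mono) auto
    then show ?thesis unfolding em pr by (rule ennreal_leI)
  qed
  have "emeasure lborel (slab S \<delta> R) = emeasure lborel (\<Union>p\<in>I. B p)" by (simp add: slab_def I_def B_def)
  also have "\<dots> \<le> (\<Sum>p\<in>I. emeasure lborel (B p))"
    by (rule emeasure_subadditive_finite[OF finI]) (auto simp: B_def)
  also have "\<dots> \<le> of_nat (card I) * ennreal ((2 * \<delta>) * (2 * R + 1) ^ CARD('n))"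
    by (rule sum_bounded_above) (rule Bm)
  also have "\<dots> = ennreal (real (card I)) * ennreal ((2 * \<delta>) * (2 * R + 1) ^ CARD('n))"
    by (simp only: ennreal_of_nat_eq_real_of_nat)
  also have "\<dots> = ennreal (real (card I) * ((2 * \<delta>) * (2 * R + 1) ^ CARD('n)))"
    using d R by (intro ennreal_mult[symmetric]) auto
  also have "real (card I) = real (\<Sum>i\<in>UNIV. card (S i))" by (simp only: cI)
  finally show ?thesis .
qed

lemma exists_slab_emeasure_le:
  fixes S :: "'n::finite \<Rightarrow> real set"
  assumes fin: "\<And>i. finite (S i)" and R: "0 \<le> R" and e: "e > 0"
  shows "\<exists>\<delta>>0. \<delta> \<le> 1/2 \<and> emeasure lborel (slab S \<delta> R) \<le> ennreal e"
proof -
  define Cs where "Cs = real (\<Sum>i\<in>UNIV. card (S i)) * (2 * (2 * R + 1) ^ CARD('n))"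
  have Cs: "Cs \<ge> 0" unfolding Cs_def using R by (intro mult_nonneg_nonneg) (auto intro: sum_nonneg)
  define \<delta> where "\<delta> = min (1/2) (e / (Cs + 1))"
  have d: "\<delta> > 0" using e Cs by (simp add: \<delta>_def)
  have "emeasure lborel (slab S \<delta> R) \<le> ennreal (real (\<Sum>i\<in>UNIV. card (S i)) * ((2 * \<delta>) * (2 * R + 1) ^ CARD('n)))"
    by (rule emeasure_slab_le[OF fin]) (use d R in auto)
  also have "real (\<Sum>i\<in>UNIV. card (S i)) * ((2 * \<delta>) * (2 * R + 1) ^ CARD('n)) = Cs * \<delta>"
    by (simp add: Cs_def)
  also have "Cs * \<delta> \<le> Cs * (e / (Cs + 1))" using Cs by (intro mult_left_mono) (auto simp: \<delta>_def)
  also have "\<dots> \<le> e" using Cs e by (simp add: field_simps)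
  finally have "emeasure lborel (slab S \<delta> R) \<le> ennreal e" by (simp add: ennreal_leI)
  moreover have "\<delta> \<le> 1/2" unfolding \<delta>_def by (rule min.cobounded1)
  ultimately show ?thesis using d by blast
qed

lemma slab_in_sets: "(\<And>i. finite (S i)) \<Longrightarrow> slab S \<delta> R \<in> sets lborel"
  unfolding slab_def by (intro sets.finite_UN) auto

lemma infnorm_ybh_diff_le_far_level:
  fixes \<rho> \<sigma> :: "real^'n::finite \<Rightarrow> int extended"
  assumes "\<forall>x\<in>superlevel \<rho> b h. infnorm x \<le> r" "\<forall>x\<in>superlevel \<sigma> b h. infnorm x \<le> r" "infnorm b \<le> r"
  shows "infnorm (ybh b h \<rho> - ybh b h \<sigma>) \<le> 2 * r"
  using infnorm_ybh_le[OF assms(1)] infnorm_ybh_le[OF assms(2)] assms(3)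
    infnorm_diff_le[of "ybh b h \<rho>" "ybh b h \<sigma>"] by simp

(* Compare both corners with y^{lambda b, h}(sigma): the time change moves corners by at most eta,
   and since no cut of sigma separates b from lambda b, replacing b by lambda b costs at most eta. *)
lemma infnorm_ybh_diff_le_near_level:
  fixes \<rho> \<sigma> :: "real^'n::finite \<Rightarrow> int extended"
  assumes lam: "lam \<in> Lambda"
    and agree: "\<forall>x. \<rho> (clamp u x) = \<sigma> (clamp u (apply_tc lam x))"
    and close: "\<forall>x. infnorm (clamp u (apply_tc lam x) - clamp u x) \<le> \<eta>" and \<eta>: "\<eta> < \<delta>" "\<eta> < 1"
    and b: "infnorm b \<le> R" "b \<notin> slab S \<delta> R"
    and near: "\<And>x. x \<in> superlevel \<rho> (\<chi> i. R + 1) h \<union> superlevel \<sigma> (\<chi> i. R + 1) h \<Longrightarrow> infnorm x \<le> R1"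
    and R1: "R + 1 \<le> R1" and u: "R1 + 2 \<le> u"
    and cells: "constant_on_cells S (\<chi> i. - (R1 + 1)) (\<chi> i. R + 2) \<sigma>"
  shows "infnorm (ybh b h \<rho> - ybh b h \<sigma>) \<le> 2 * \<eta>"
proof -
  let ?c = "(\<chi> i. R + 1) :: real^'n" and ?f = "apply_tc lam"
  have "infnorm (?f b - b) \<le> \<eta>"
    using time_change_agrees_near(2)[OF agree close \<eta>(2)] b R1 u by simp
  then have fb: "\<bar>?f b $ i - b $ i\<bar> \<le> \<eta>" for i
    using component_le_infnorm_cart[of "?f b - b" i] by simp
  have bi: "\<bar>b $ i\<bar> \<le> R" for i using b(1) component_le_infnorm_cart order_trans by blast
  have "b$i \<le> R + 1" "?f b $ i \<le> R + 1" for i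
    using bi[of i] fb[of i] \<eta> by (auto simp: abs_le_iff)
  then have "b \<le> ?c" "?f b \<le> ?c" by (simp_all add: less_eq_vec_def)
  then have in_box: "infnorm x \<le> R1"
    if "x \<in> superlevel \<rho> b h \<or> x \<in> superlevel \<sigma> b h \<or> x \<in> superlevel \<sigma> (?f b) h" for x
    using that near superlevel_antimono[OF order_refl] by blast
  have "infnorm (ybh b h \<rho> - ybh (?f b) h \<sigma>) \<le> \<eta>"
  proof (rule infnorm_ybh_time_change_le[OF lam agree close \<eta>(2)])
    show "infnorm b \<le> u - 1" using b(1) R1 u by linarith
    show "infnorm x \<le> u - 1" if "x \<in> superlevel \<rho> b h" for x
      using in_box[OF disjI1[OF that]] u by linarith
    show "infnorm x \<le> u - 1" if "x \<in> superlevel \<sigma> (?f b) h" for x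
      using in_box[OF disjI2[OF disjI2[OF that]]] u by linarith
  qed
  moreover have "infnorm (ybh b h \<sigma> - ybh (?f b) h \<sigma>) \<le> infnorm (b - ?f b)"
  proof (rule infnorm_ybh_diff_le_no_cut[OF cells])
    show "(\<chi> i. - (R1 + 1)) $ i \<le> b $ i \<and> b $ i < (\<chi> i. R + 2) $ i"
      and "(\<chi> i. - (R1 + 1)) $ i \<le> ?f b $ i \<and> ?f b $ i < (\<chi> i. R + 2) $ i" for i
      using bi[of i] fb[of i] R1 \<eta> by (auto simp: abs_le_iff)
    show "\<not> (min (b $ i) (?f b $ i) < s \<and> s \<le> max (b $ i) (?f b $ i))" if "s \<in> S i" for i s
      using slab_coordinate_far[OF b(2,1) that] fb[of i] \<eta> by (auto simp: min_def max_def abs_le_iff)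
    show "(\<chi> i. - (R1 + 1)) \<le> x" if "x \<in> superlevel \<sigma> b h" for x
      by (rule const_le_of_infnorm_le) (use in_box[OF disjI2[OF disjI1[OF that]]] in linarith)
    show "(\<chi> i. - (R1 + 1)) \<le> x" if "x \<in> superlevel \<sigma> (?f b) h" for x
      by (rule const_le_of_infnorm_le) (use in_box[OF disjI2[OF disjI2[OF that]]] in linarith)
  qed
  ultimately show ?thesis
    using \<open>infnorm (?f b - b) \<le> \<eta>\<close> infnorm_triangle[of "ybh b h \<rho> - ybh (?f b) h \<sigma>" "ybh (?f b) h \<sigma> - ybh b h \<sigma>"]
    by (simp add: infnorm_sub)
qed

lemma theta_le_off_slab:
  fixes \<rho> \<sigma> :: "real^'n::finite \<Rightarrow> int extended" and R :: real
  defines "p \<equiv> (real CARD('n) + 1) / real CARD('n)" and "c \<equiv> (\<chi> i. R + 1) :: real^'n"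
  assumes lam: "lam \<in> Lambda"
    and agree: "\<forall>x. \<rho> (clamp u x) = \<sigma> (clamp u (apply_tc lam x))"
    and close: "\<forall>x. infnorm (clamp u (apply_tc lam x) - clamp u x) \<le> \<eta>"
    and \<eta>: "\<eta> < \<delta>" "\<eta> < 1" "2 * \<eta> \<le> \<epsilon>"
    and b: "infnorm b \<le> R" "b \<notin> slab S \<delta> R"
    and far: "\<And>h x. h \<le> h\<^sub>0 \<Longrightarrow> x \<in> superlevel \<rho> c h \<union> superlevel \<sigma> c h \<Longrightarrow> infnorm x \<le> \<epsilon> / 2 * \<bar>real_of_int h\<bar> powr p"
    and far_b: "\<And>h. h \<le> h\<^sub>0 \<Longrightarrow> R \<le> \<epsilon> / 2 * \<bar>real_of_int h\<bar> powr p"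
    and near: "\<And>x. x \<in> superlevel \<rho> c h\<^sub>0 \<union> superlevel \<sigma> c h\<^sub>0 \<Longrightarrow> infnorm x \<le> R\<^sub>1"
    and R\<^sub>1: "R + 1 \<le> R\<^sub>1" and u: "R\<^sub>1 + 2 \<le> u"
    and cells: "constant_on_cells S (\<chi> i. - (R\<^sub>1 + 1)) (\<chi> i. R + 2) \<sigma>"
  shows "theta b \<rho> \<sigma> \<le> ennreal \<epsilon>"
proof -
  have "b$i \<le> R + 1" for i using b(1) component_le_infnorm_cart[of b i] by linarith
  then have bc: "b \<le> c" by (simp add: c_def less_eq_vec_def)
  have "\<bar>real_of_int h\<bar> powr (- p) * infnorm (ybh b h \<rho> - ybh b h \<sigma>) \<le> \<epsilon>" if h: "h \<le> -1" for h
  proof (cases "h \<le> h\<^sub>0")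
    case True
    have "infnorm (ybh b h \<rho> - ybh b h \<sigma>) \<le> 2 * (\<epsilon> / 2 * \<bar>real_of_int h\<bar> powr p)"
      using far[OF True] far_b[OF True] b(1) superlevel_antimono[OF order_refl bc]
      by (intro infnorm_ybh_diff_le_far_level) (blast, blast, linarith)
    then show ?thesis using h by (simp add: powr_neg_mult_le_iff)
  next
    case False
    have "infnorm (ybh b h \<rho> - ybh b h \<sigma>) \<le> 2 * \<eta>"
    proof (rule infnorm_ybh_diff_le_near_level[OF lam agree close \<eta>(1,2) b _ R\<^sub>1 u cells])
      show "infnorm x \<le> R\<^sub>1" if "x \<in> superlevel \<rho> (\<chi> i. R + 1) h \<union> superlevel \<sigma> (\<chi> i. R + 1) h" for x
        using that near superlevel_antimono[of h\<^sub>0 h c c] False unfolding c_def by auto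
    qed
    moreover have "1 \<le> \<bar>real_of_int h\<bar> powr p" using h by (simp add: p_def ge_one_powr_ge_zero)
    then have "\<bar>real_of_int h\<bar> powr (- p) \<le> 1" by (simp add: powr_minus inverse_le_1_iff)
    ultimately have "\<bar>real_of_int h\<bar> powr (- p) * infnorm (ybh b h \<rho> - ybh b h \<sigma>) \<le> 1 * (2 * \<eta>)"
      by (intro mult_mono) (auto simp: infnorm_pos_le)
    with \<eta>(3) show ?thesis by simp
  qed
  moreover have "- (real CARD('n) + 1) / real CARD('n) = - p" by (simp only: p_def minus_divide_left)
  ultimately show ?thesis unfolding theta_def by (intro SUP_least ennreal_leI) auto
qed

lemma exp_infnorm_mult_min_le:
  fixes b :: "'a::euclidean_space" and t :: ennreal
  assumes small: "infnorm b \<le> R \<Longrightarrow> b \<notin> A \<Longrightarrow> t \<le> ennreal \<epsilon>"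
  shows "ennreal (exp (- infnorm b)) * min 1 t
    \<le> (ennreal (exp (- R / 2)) + ennreal \<epsilon>) * ennreal (exp (- infnorm b / 2)) + indicator A b"
proof -
  have exp_split: "exp (- infnorm b) = exp (- infnorm b / 2) * exp (- infnorm b / 2)"
    by (simp add: exp_add[symmetric])
  consider "infnorm b \<le> R \<and> b \<notin> A" | "R < infnorm b" | "b \<in> A" by fastforce
  then show ?thesis
  proof cases
    case 1
    have "ennreal (exp (- infnorm b)) * min 1 t \<le> ennreal (exp (- infnorm b / 2)) * ennreal \<epsilon>"
      using small 1 exp_split by (intro mult_mono) (auto simp: min.coboundedI2 mult_le_one ennreal_leI infnorm_pos_le)
    also have "\<dots> \<le> ennreal (exp (- infnorm b / 2)) * (ennreal (exp (- R / 2)) + ennreal \<epsilon>)"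
      by (intro mult_left_mono) auto
    finally show ?thesis by (simp add: mult.commute add_increasing2)
  next
    case 2
    then have "exp (- infnorm b) \<le> exp (- R / 2) * exp (- infnorm b / 2)"
      unfolding exp_split by (intro mult_right_mono) auto
    then have "ennreal (exp (- infnorm b)) * min 1 t \<le> ennreal (exp (- R / 2)) * ennreal (exp (- infnorm b / 2))"
      using mult_mono[of "ennreal (exp (- infnorm b))" _ "min 1 t" 1]
      by (simp add: ennreal_mult[symmetric] ennreal_leI)
    then show ?thesis by (simp add: distrib_right add_increasing2)
  next
    case 3
    have "ennreal (exp (- infnorm b)) * min 1 t \<le> 1 * 1" by (intro mult_mono) (auto simp: infnorm_pos_le)
    with 3 show ?thesis by (simp add: add_increasing)
  qed
qed

lemma Theta_le_split:
  fixes \<rho> \<sigma> :: "real^'n::finite \<Rightarrow> int extended"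
  assumes A: "A \<in> sets lborel"
    and small: "\<And>b. infnorm b \<le> R \<Longrightarrow> b \<notin> A \<Longrightarrow> theta b \<rho> \<sigma> \<le> ennreal \<epsilon>"
  shows "Theta \<rho> \<sigma> \<le> (ennreal (exp (- R / 2)) + ennreal \<epsilon>) * (\<integral>\<^sup>+b. ennreal (exp (- infnorm (b::real^'n) / 2)) \<partial>lborel)
    + emeasure lborel A"
proof -
  have "(\<lambda>b::real^'n. exp (- infnorm b / 2)) \<in> borel_measurable borel"
    by (intro borel_measurable_continuous_onI continuous_intros) auto
  then have "(\<lambda>b::real^'n. ennreal (exp (- infnorm b / 2))) \<in> borel_measurable lborel" by measurable
  with A have "(\<integral>\<^sup>+b. (ennreal (exp (- R / 2)) + ennreal \<epsilon>) * ennreal (exp (- infnorm b / 2)) + indicator A b \<partial>lborel)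
      = (ennreal (exp (- R / 2)) + ennreal \<epsilon>) * (\<integral>\<^sup>+b. ennreal (exp (- infnorm (b::real^'n) / 2)) \<partial>lborel)
        + emeasure lborel A"
    by (simp add: nn_integral_add nn_integral_cmult)
  moreover have "Theta \<rho> \<sigma> \<le> (\<integral>\<^sup>+b. (ennreal (exp (- R / 2)) + ennreal \<epsilon>) * ennreal (exp (- infnorm b / 2))
      + indicator A b \<partial>lborel)"
    unfolding Theta_def using small by (intro nn_integral_mono exp_infnorm_mult_min_le)
  ultimately show ?thesis by simp
qed

lemma ennreal_tendsto_0I:
  fixes f :: "nat \<Rightarrow> ennreal"
  assumes "\<And>e. e > 0 \<Longrightarrow> \<forall>\<^sub>F n in sequentially. f n \<le> ennreal e"
  shows "f \<longlonglongrightarrow> 0"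
proof (rule order_tendstoI)
  fix u :: ennreal assume "u > 0"
  then obtain e where e: "e > 0" "ennreal e < u"
  proof (cases u rule: ennreal_cases)
    case (real r)
    with \<open>u > 0\<close> show ?thesis by (intro that[of "r / 2"]) (auto simp: ennreal_lessI)
  next
    case top
    with that[of 1] show ?thesis by simp
  qed
  from assms[OF e(1)] show "\<forall>\<^sub>F n in sequentially. f n < u"
    by eventually_elim (use e(2) in auto)
qed simp

lemma small_superlevels_obtains_level:
  assumes F: "small_superlevels p F c" and G: "small_superlevels p G c" and \<epsilon>: "0 < \<epsilon>" and p: "0 < p"
  obtains h\<^sub>0 where
    "\<And>h n x. h \<le> h\<^sub>0 \<Longrightarrow> x \<in> superlevel (F n) c h \<union> superlevel (G n) c h \<Longrightarrow> infnorm x \<le> \<epsilon> * \<bar>real_of_int h\<bar> powr p"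
    "\<And>h. h \<le> h\<^sub>0 \<Longrightarrow> R \<le> \<epsilon> * \<bar>real_of_int h\<bar> powr p"
proof -
  have "\<exists>h\<^sub>0. \<forall>h\<le>h\<^sub>0. (\<forall>n. \<forall>x\<in>superlevel (F n) c h. infnorm x \<le> \<epsilon> * \<bar>real_of_int h\<bar> powr p)
      \<and> (\<forall>n. \<forall>x\<in>superlevel (G n) c h. infnorm x \<le> \<epsilon> * \<bar>real_of_int h\<bar> powr p)
      \<and> R \<le> \<epsilon> * \<bar>real_of_int h\<bar> powr p"
    using eventually_conj[OF F[unfolded small_superlevels_def, rule_format, OF \<epsilon>]
        eventually_conj[OF G[unfolded small_superlevels_def, rule_format, OF \<epsilon>] eventually_le_mult_abs_powr[OF \<epsilon> p]]]
    by (simp only: eventually_at_bot_linorder)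
  then obtain h\<^sub>0 where "\<forall>h\<le>h\<^sub>0. (\<forall>n. \<forall>x\<in>superlevel (F n) c h. infnorm x \<le> \<epsilon> * \<bar>real_of_int h\<bar> powr p)
      \<and> (\<forall>n. \<forall>x\<in>superlevel (G n) c h. infnorm x \<le> \<epsilon> * \<bar>real_of_int h\<bar> powr p)
      \<and> R \<le> \<epsilon> * \<bar>real_of_int h\<bar> powr p" ..
  then show thesis by (intro that[of h\<^sub>0]) auto
qed

lemma Theta_le_of_dS_less:
  fixes \<rho> \<sigma> :: "real^'n::finite \<Rightarrow> int extended" and R :: real
  defines "p \<equiv> (real CARD('n) + 1) / real CARD('n)" and "c \<equiv> (\<chi> i. R + 1) :: real^'n"
  assumes dS: "dS \<rho> \<sigma> < ennreal (exp (- (R\<^sub>1 + 2 + 2)) * min 1 \<eta>)"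
    and \<eta>: "0 < \<eta>" "\<eta> < \<delta>" "\<eta> < 1" "2 * \<eta> \<le> \<epsilon>"
    and far: "\<And>h x. h \<le> h\<^sub>0 \<Longrightarrow> x \<in> superlevel \<rho> c h \<union> superlevel \<sigma> c h \<Longrightarrow> infnorm x \<le> \<epsilon> / 2 * \<bar>real_of_int h\<bar> powr p"
    and far_b: "\<And>h. h \<le> h\<^sub>0 \<Longrightarrow> R \<le> \<epsilon> / 2 * \<bar>real_of_int h\<bar> powr p"
    and near: "\<And>x. x \<in> superlevel \<rho> c h\<^sub>0 \<union> superlevel \<sigma> c h\<^sub>0 \<Longrightarrow> infnorm x \<le> R\<^sub>1"
    and R: "0 \<le> R" "R + 1 \<le> R\<^sub>1"
    and S: "\<And>i. finite (S i)" and cells: "constant_on_cells S (\<chi> i. - (R\<^sub>1 + 1)) (\<chi> i. R + 2) \<sigma>"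
  shows "Theta \<rho> \<sigma> \<le> (ennreal (exp (- R / 2)) + ennreal \<epsilon>) * (\<integral>\<^sup>+b. ennreal (exp (- infnorm (b::real^'n) / 2)) \<partial>lborel)
    + emeasure lborel (slab S \<delta> R)"
proof -
  have "0 \<le> R\<^sub>1 + 2" using R by simp
  then obtain lam u where "lam \<in> Lambda" "R\<^sub>1 + 2 \<le> u" "u \<le> R\<^sub>1 + 2 + 1"
      "\<forall>x. \<rho> (clamp u x) = \<sigma> (clamp u (apply_tc lam x))"
      "\<forall>x. infnorm (clamp u (apply_tc lam x) - clamp u x) \<le> \<eta>"
    by (rule dS_less_obtains_time_change[OF dS _ \<eta>(1)])
  from theta_le_off_slab[OF this(1,4,5) \<eta>(2-4) _ _ far[unfolded p_def c_def] far_b[unfolded p_def]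
      near[unfolded c_def] R(2) this(2) cells]
  show ?thesis by (intro Theta_le_split[OF slab_in_sets[of S, OF S]])
qed

lemma obtains_tolerance_and_radius:
  assumes C: "0 \<le> C" and e: "0 < e"
  obtains \<epsilon> R where "0 < \<epsilon>" "0 \<le> R" "(ennreal (exp (- R / 2)) + ennreal \<epsilon>) * ennreal C \<le> ennreal e"
proof -
  define \<epsilon> where "\<epsilon> = e / (2 * (C + 1))"
  define R where "R = 2 * max 0 (- ln \<epsilon>)"
  have \<epsilon>: "0 < \<epsilon>" "2 * (\<epsilon> * C) \<le> e" using C e by (auto simp: \<epsilon>_def field_simps)
  have "- R / 2 \<le> ln \<epsilon>" by (simp add: R_def)
  then have "exp (- R / 2) \<le> \<epsilon>" using \<epsilon>(1) by (metis exp_le_cancel_iff exp_ln)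
  then have "exp (- R / 2) * C \<le> \<epsilon> * C" using C by (rule mult_right_mono)
  then have "(exp (- R / 2) + \<epsilon>) * C \<le> e" using \<epsilon>(2) by (simp add: distrib_right)
  moreover have "(ennreal (exp (- R / 2)) + ennreal \<epsilon>) * ennreal C = ennreal ((exp (- R / 2) + \<epsilon>) * C)"
    using \<epsilon>(1) C by (simp add: ennreal_mult)
  ultimately have "(ennreal (exp (- R / 2)) + ennreal \<epsilon>) * ennreal C \<le> ennreal e" by (simp add: ennreal_leI)
  moreover have "0 \<le> R" by (simp add: R_def)
  ultimately show thesis using \<epsilon>(1) that by blast
qed

lemma small_superlevels_imp_Theta_tendsto_0:
  fixes \<sigma>s :: "nat \<Rightarrow> real^'n::finite \<Rightarrow> int extended" and \<sigma> :: "real^'n \<Rightarrow> int extended"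
  defines "p \<equiv> (real CARD('n) + 1) / real CARD('n)"
  assumes \<sigma>: "\<sigma> \<in> Sigma_set" and dS: "(\<lambda>n. dS (\<sigma>s n) \<sigma>) \<longlonglongrightarrow> 0"
    and small: "\<And>b. small_superlevels p \<sigma>s b"
  shows "(\<lambda>n. Theta (\<sigma>s n) \<sigma>) \<longlonglongrightarrow> 0"
proof (rule ennreal_tendsto_0I)
  fix e :: real assume "e > 0"
  then have e: "0 < e / 2" by simp
  obtain C where C: "0 \<le> C" "(\<integral>\<^sup>+b. ennreal (exp (- infnorm (b::real^'n) / 2)) \<partial>lborel) = ennreal C"
    using nn_integral_exp_infnorm_finite[of "1/2", where 'a = "real^'n"]
    by (cases "\<integral>\<^sup>+b. ennreal (exp (- infnorm (b::real^'n) / 2)) \<partial>lborel" rule: ennreal_cases) auto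
  obtain \<epsilon> R where \<epsilon>: "0 < \<epsilon>" and R: "0 \<le> R"
    and tail: "(ennreal (exp (- R / 2)) + ennreal \<epsilon>) * ennreal C \<le> ennreal (e / 2)"
    using obtains_tolerance_and_radius[OF C(1) e] by blast
  define c :: "real^'n" where "c = (\<chi> i. R + 1)"
  have "0 < \<epsilon> / 2" "0 < p" using \<epsilon> by (simp_all add: p_def)
  then obtain h\<^sub>0 where
    far: "\<And>h n x. h \<le> h\<^sub>0 \<Longrightarrow> x \<in> superlevel (\<sigma>s n) c h \<union> superlevel \<sigma> c h \<Longrightarrow>
      infnorm x \<le> \<epsilon> / 2 * \<bar>real_of_int h\<bar> powr p" and
    far_b: "\<And>h. h \<le> h\<^sub>0 \<Longrightarrow> R \<le> \<epsilon> / 2 * \<bar>real_of_int h\<bar> powr p"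
    using small_superlevels_obtains_level[where R = R, OF small[of c]
        Sigma_set_small_superlevels[OF \<sigma>, of c, folded p_def]] by blast
  define R\<^sub>1 where "R\<^sub>1 = max (R + 1) (\<epsilon> / 2 * \<bar>real_of_int h\<^sub>0\<bar> powr p)"
  have R\<^sub>1: "R + 1 \<le> R\<^sub>1" by (simp add: R\<^sub>1_def)
  have near: "infnorm x \<le> R\<^sub>1" if "x \<in> superlevel (\<sigma>s n) c h\<^sub>0 \<union> superlevel \<sigma> c h\<^sub>0" for n x
    using far[OF order_refl that] by (simp add: R\<^sub>1_def)
  have in_D: "in_D \<sigma>" using \<sigma> unfolding Sigma_set_def by blast
  have box: "(\<chi> i. - (R\<^sub>1 + 1)) $ i < (\<chi> i. R + 2) $ i" for i :: 'n using R R\<^sub>1 by simp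
  obtain S where S: "\<And>i. finite (S i)" and cells: "constant_on_cells S (\<chi> i. - (R\<^sub>1 + 1)) (\<chi> i. R + 2) \<sigma>"
    using in_D_obtains_cells[OF in_D box] by blast
  obtain \<delta> where \<delta>: "0 < \<delta>" "\<delta> \<le> 1/2" "emeasure lborel (slab S \<delta> R) \<le> ennreal (e / 2)"
    using exists_slab_emeasure_le[of S, OF S R e] by auto
  define \<eta> where "\<eta> = min (\<delta> / 2) (\<epsilon> / 2)"
  have \<eta>: "0 < \<eta>" "\<eta> < \<delta>" "\<eta> < 1" "2 * \<eta> \<le> \<epsilon>" using \<delta> \<epsilon> by (auto simp: \<eta>_def)
  have "\<forall>\<^sub>F n in sequentially. dS (\<sigma>s n) \<sigma> < ennreal (exp (- (R\<^sub>1 + 2 + 2)) * min 1 \<eta>)"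
    using dS by (rule order_tendstoD(2)) (use \<eta>(1) in simp)
  then show "\<forall>\<^sub>F n in sequentially. Theta (\<sigma>s n) \<sigma> \<le> ennreal e"
  proof eventually_elim
    case (elim n)
    have "Theta (\<sigma>s n) \<sigma> \<le> (ennreal (exp (- R / 2)) + ennreal \<epsilon>) * ennreal C + emeasure lborel (slab S \<delta> R)"
      using Theta_le_of_dS_less[OF elim \<eta> far[unfolded c_def p_def] far_b[unfolded p_def]
          near[unfolded c_def] R R\<^sub>1 S cells]
      unfolding C(2) .
    also have "\<dots> \<le> ennreal (e / 2) + ennreal (e / 2)" using tail \<delta>(3) by (rule add_mono)
    also have "\<dots> = ennreal e" using e by (simp add: ennreal_plus[symmetric] del: ennreal_plus)
    finally show ?case .
  qed
qed

theorem lemma10p2: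
  fixes \<sigma>s :: "nat \<Rightarrow> (real^'n::finite \<Rightarrow> int extended)" and \<sigma> :: "real^'n \<Rightarrow> int extended"
  assumes "CARD('n) \<ge> 2"
    and "\<And>n. \<sigma>s n \<in> Sigma_set" and "\<sigma> \<in> Sigma_set"
    and "(\<lambda>n. dS (\<sigma>s n) \<sigma>) \<longlonglongrightarrow> 0"
  shows "((\<lambda>n. dSigma (\<sigma>s n) \<sigma>) \<longlonglongrightarrow> 0 \<longleftrightarrow>
           (\<forall>b::real^'n. ((\<lambda>h::int. SUP n. ereal (\<bar>real_of_int h\<bar> powr (- (real CARD('n) + 1) / real CARD('n))
                                      * infnorm (ybh b h (\<sigma>s n)))) \<longlongrightarrow> 0) at_bot))
       \<and> ((\<forall>b::real^'n. ((\<lambda>h::int. SUP n. ereal (\<bar>real_of_int h\<bar> powr (- (real CARD('n) + 1) / real CARD('n))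
                                      * infnorm (ybh b h (\<sigma>s n)))) \<longlongrightarrow> 0) at_bot)
           \<longleftrightarrow>
           (\<forall>b::real^'n. ((\<lambda>M::real. SUP n. SUP y\<in>{y. y \<le> b \<and> infnorm y \<ge> M}.
                 ereal (infnorm y powr (- real CARD('n) / (real CARD('n) + 1))) * zs_ereal (\<sigma>s n y))
              \<longlongrightarrow> MInfty) at_top))"
proof -
  note \<sigma>s = assms(2) and \<sigma> = assms(3) and dS = assms(4)
  define p where "p = (real CARD('n) + 1) / real CARD('n)"
  define q where "q = real CARD('n) / (real CARD('n) + 1)"
  have p: "0 < p" and pq: "p * q = 1" by (simp_all add: p_def q_def)
  have exponents: "- (real CARD('n) + 1) / real CARD('n) = - p" "- real CARD('n) / (real CARD('n) + 1) = - q"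
    by (simp_all only: p_def q_def minus_divide_left)
  have each: "small_superlevels p (\<lambda>_. \<sigma>s n) b" for n b
    unfolding p_def by (rule Sigma_set_small_superlevels[OF \<sigma>s])
  have decay: "((\<lambda>h::int. SUP n. ereal (\<bar>real_of_int h\<bar> powr (- (real CARD('n) + 1) / real CARD('n))
      * infnorm (ybh b h (\<sigma>s n)))) \<longlongrightarrow> 0) at_bot \<longleftrightarrow> small_superlevels p \<sigma>s b" for b
    unfolding exponents by (rule ybh_decay_iff_small_superlevels[OF p small_superlevels_bdd_below[OF each]])
  have growth: "((\<lambda>M::real. SUP n. SUP y\<in>{y. y \<le> b \<and> infnorm y \<ge> M}.
      ereal (infnorm y powr (- real CARD('n) / (real CARD('n) + 1))) * zs_ereal (\<sigma>s n y)) \<longlongrightarrow> MInfty) at_top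
    \<longleftrightarrow> small_superlevels p \<sigma>s b" for b
    unfolding exponents using growth_imp_small_superlevels[OF p pq] small_superlevels_imp_growth[OF p pq]
    by (intro iffI)
  have "((\<lambda>n. dSigma (\<sigma>s n) \<sigma>) \<longlonglongrightarrow> 0) \<longleftrightarrow> (\<forall>b. small_superlevels p \<sigma>s b)"
  proof
    assume lim: "(\<lambda>n. dSigma (\<sigma>s n) \<sigma>) \<longlonglongrightarrow> 0"
    have Theta: "(\<lambda>n. Theta (\<sigma>s n) \<sigma>) \<longlonglongrightarrow> 0"
    proof (rule tendsto_sandwich[of "\<lambda>_. 0" _ _ "\<lambda>n. dSigma (\<sigma>s n) \<sigma>"])
      show "\<forall>\<^sub>F n in sequentially. Theta (\<sigma>s n) \<sigma> \<le> dSigma (\<sigma>s n) \<sigma>"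
        by (simp add: dSigma_def)
    qed (use lim in auto)
    show "\<forall>b. small_superlevels p \<sigma>s b"
      unfolding p_def
      by (intro allI Theta_tendsto_0_imp_small_superlevels[OF Sigma_set_small_superlevels[OF \<sigma>s]
          Sigma_set_small_superlevels[OF \<sigma>] Theta])
  next
    assume "\<forall>b. small_superlevels p \<sigma>s b"
    then have "(\<lambda>n. Theta (\<sigma>s n) \<sigma>) \<longlonglongrightarrow> 0"
      unfolding p_def by (intro small_superlevels_imp_Theta_tendsto_0[OF \<sigma> dS]) blast
    from tendsto_add[OF this dS] show "(\<lambda>n. dSigma (\<sigma>s n) \<sigma>) \<longlonglongrightarrow> 0"
      by (simp add: dSigma_def)
  qed
  then show ?thesis unfolding decay growth by blast
qed

end
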